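(* Let $\mathbf{C}$ be a category of $\mathbf{FI}$ type. The set of character polynomials on $\mathbf{C}$ is closed under pointwise products (so forms an algebra), and if $P,Q$ are character polynomials of respective degrees $\leq c_1$ and $\leq c_2$, then $P\cdot Q$ is a character polynomial of degree $\leq c_1+c_2$.
   Context: A category $\mathbf{C}$ is of $\mathbf{FI}$ type if: (1) all Hom-sets are finite; (2) every morphism is a monomorphism and every endomorphism is an isomorphism; (3) for all objects $c,d$ the group $G_d=\mathrm{Aut}_{\mathbf{C}}(d)$ acts transitively on $\mathrm{Hom}_{\mathbf{C}}(c,d)$; (4) for every $d$ only finitely many isomorphism classes of $c$ have $\mathrm{Hom}(c,d)\neq\emptyset$; (5) every pair $c_1\to d\leftarrow c_2$ has a pullback, and every pair $f_i:p\to c_i$ has a weak push-out, i.e. a commutative pullback square $g_i:c_i\to d$ such that for every other pullback square $h_i:c_i\to z$ with $h_1f_1=h_2f_2$ there is a unique $h:d\to z$ with $hg_i=h_i$. Write $c\leq d$ if $\mathrm{Hom}(c,d)\neq\emptyset$. Binomial set: $\binom{d}{c}=\mathrm{Hom}(c,d)/G_c$. For a conjugacy class $\mu\subseteq G_c$ (write $|\mu|=c$), $\binom{X}{\mu}$ is the class function on every $G_d$ given by $\sigma\mapsto\#\{[f]\in\binom{d}{c}:\exists\psi\in\mu,\ \sigma f=f\psi\}$. A character polynomial is a $\mathbb{C}$-linear combination of such functions; it has degree $\leq d$ if every $\binom{X}{\mu}$ appearing nontrivially has $|\mu|\leq d$. Write $d\geq c_1+c_2$ if $w\leq d$ for every weak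 push-out object $w$ of any pair $p\to c_1$, $p\to c_2$; degree $\leq c_1+c_2$ means degree $\leq d$ for every $d\geq c_1+c_2$. *)

theory Defs
  imports Complex_Main
begin

text \<open>A (small) category presented concretely: a set of objects, a set of morphisms,
domain/codomain maps, identities and composition (Comp g f = g after f).\<close>

record ('o, 'm) cat =
  Obj  :: "'o set"
  Mor  :: "'m set"
  Dom  :: "'m \<Rightarrow> 'o"
  Cod  :: "'m \<Rightarrow> 'o"
  Id   :: "'o \<Rightarrow> 'm"
  Comp :: "'m \<Rightarrow> 'm \<Rightarrow> 'm"

definition hom :: "('o, 'm) cat \<Rightarrow> 'o \<Rightarrow> 'o \<Rightarrow> 'm set" where
  "hom C c d = {f \<in> Mor C. Dom C f = c \<and> Cod C f = d}"

definition is_category :: "('o, 'm) cat \<Rightarrow> bool" where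
  "is_category C \<longleftrightarrow>
     (\<forall>f \<in> Mor C. Dom C f \<in> Obj C \<and> Cod C f \<in> Obj C) \<and>
     (\<forall>c \<in> Obj C. Id C c \<in> hom C c c) \<and>
     (\<forall>f \<in> Mor C. \<forall>g \<in> Mor C. Dom C g = Cod C f \<longrightarrow>
         Comp C g f \<in> hom C (Dom C f) (Cod C g)) \<and>
     (\<forall>f \<in> Mor C. \<forall>g \<in> Mor C. \<forall>h \<in> Mor C. Dom C g = Cod C f \<longrightarrow> Dom C h = Cod C g \<longrightarrow>
         Comp C h (Comp C g f) = Comp C (Comp C h g) f) \<and>
     (\<forall>f \<in> Mor C. Comp C (Id C (Cod C f)) f = f \<and> Comp C f (Id C (Dom C f)) = f)"

definition is_mono :: "('o, 'm) cat \<Rightarrow> 'm \<Rightarrow> bool" where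
  "is_mono C f \<longleftrightarrow> f \<in> Mor C \<and>
     (\<forall>g \<in> Mor C. \<forall>h \<in> Mor C. Cod C g = Dom C f \<longrightarrow> Cod C h = Dom C f \<longrightarrow> Dom C g = Dom C h \<longrightarrow>
        Comp C f g = Comp C f h \<longrightarrow> g = h)"

definition is_iso :: "('o, 'm) cat \<Rightarrow> 'm \<Rightarrow> bool" where
  "is_iso C f \<longleftrightarrow> f \<in> Mor C \<and> (\<exists>g \<in> hom C (Cod C f) (Dom C f).
      Comp C g f = Id C (Dom C f) \<and> Comp C f g = Id C (Cod C f))"

definition Aut :: "('o, 'm) cat \<Rightarrow> 'o \<Rightarrow> 'm set" where
  "Aut C c = {f \<in> hom C c c. is_iso C f}"

definition obj_iso :: "('o, 'm) cat \<Rightarrow> 'o \<Rightarrow> 'o \<Rightarrow> bool" where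
  "obj_iso C c d \<longleftrightarrow> (\<exists>f \<in> hom C c d. is_iso C f)"

definition obj_le :: "('o, 'm) cat \<Rightarrow> 'o \<Rightarrow> 'o \<Rightarrow> bool" where
  "obj_le C c d \<longleftrightarrow> hom C c d \<noteq> {}"

definition is_pullback :: "('o, 'm) cat \<Rightarrow> 'm \<Rightarrow> 'm \<Rightarrow> 'o \<Rightarrow> 'm \<Rightarrow> 'm \<Rightarrow> bool" where
  "is_pullback C f1 f2 p g1 g2 \<longleftrightarrow>
     f1 \<in> Mor C \<and> f2 \<in> Mor C \<and> Cod C f1 = Cod C f2 \<and> p \<in> Obj C \<and>
     g1 \<in> hom C p (Dom C f1) \<and> g2 \<in> hom C p (Dom C f2) \<and>
     Comp C f1 g1 = Comp C f2 g2 \<and>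
     (\<forall>z \<in> Obj C. \<forall>h1 \<in> hom C z (Dom C f1). \<forall>h2 \<in> hom C z (Dom C f2).
        Comp C f1 h1 = Comp C f2 h2 \<longrightarrow>
        (\<exists>!h. h \<in> hom C z p \<and> Comp C g1 h = h1 \<and> Comp C g2 h = h2))"

definition is_weak_pushout :: "('o, 'm) cat \<Rightarrow> 'm \<Rightarrow> 'm \<Rightarrow> 'o \<Rightarrow> 'm \<Rightarrow> 'm \<Rightarrow> bool" where
  "is_weak_pushout C f1 f2 d g1 g2 \<longleftrightarrow>
     f1 \<in> Mor C \<and> f2 \<in> Mor C \<and> Dom C f1 = Dom C f2 \<and> d \<in> Obj C \<and>
     g1 \<in> hom C (Cod C f1) d \<and> g2 \<in> hom C (Cod C f2) d \<and>
     is_pullback C g1 g2 (Dom C f1) f1 f2 \<and>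
     (\<forall>z \<in> Obj C. \<forall>h1 \<in> hom C (Cod C f1) z. \<forall>h2 \<in> hom C (Cod C f2) z.
        is_pullback C h1 h2 (Dom C f1) f1 f2 \<longrightarrow>
        (\<exists>!h. h \<in> hom C d z \<and> Comp C h g1 = h1 \<and> Comp C h g2 = h2))"

definition FI_type :: "('o, 'm) cat \<Rightarrow> bool" where
  "FI_type C \<longleftrightarrow> is_category C \<and>
     \<comment> \<open>(1) finite Hom-sets\<close>
     (\<forall>c \<in> Obj C. \<forall>d \<in> Obj C. finite (hom C c d)) \<and>
     \<comment> \<open>(2) monomorphisms; endomorphisms are isomorphisms\<close>
     (\<forall>f \<in> Mor C. is_mono C f) \<and>
     (\<forall>c \<in> Obj C. \<forall>f \<in> hom C c c. is_iso C f) \<and>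
     \<comment> \<open>(3) transitivity of the \<open>G_d\<close>-action on \<open>Hom(c,d)\<close>\<close>
     (\<forall>c \<in> Obj C. \<forall>d \<in> Obj C. \<forall>f \<in> hom C c d. \<forall>g \<in> hom C c d.
        \<exists>\<sigma> \<in> Aut C d. Comp C \<sigma> f = g) \<and>
     \<comment> \<open>(4) finitely many isomorphism classes below each object\<close>
     (\<forall>d \<in> Obj C. \<exists>F. finite F \<and> F \<subseteq> Obj C \<and>
        (\<forall>c \<in> Obj C. hom C c d \<noteq> {} \<longrightarrow> (\<exists>c' \<in> F. obj_iso C c c'))) \<and>
     \<comment> \<open>(5) pullbacks and weak push-outs\<close>
     (\<forall>f1 \<in> Mor C. \<forall>f2 \<in> Mor C. Cod C f1 = Cod C f2 \<longrightarrow>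
        (\<exists>p g1 g2. is_pullback C f1 f2 p g1 g2)) \<and>
     (\<forall>f1 \<in> Mor C. \<forall>f2 \<in> Mor C. Dom C f1 = Dom C f2 \<longrightarrow>
        (\<exists>d g1 g2. is_weak_pushout C f1 f2 d g1 g2))"

text \<open>Conjugacy classes: \<open>\<mu> = (c, K)\<close> with \<open>K\<close> a conjugacy class of \<open>G_c\<close>; \<open>|\<mu>| = c\<close>.\<close>
definition conj_class :: "('o, 'm) cat \<Rightarrow> 'o \<times> 'm set \<Rightarrow> bool" where
  "conj_class C \<mu> \<longleftrightarrow> fst \<mu> \<in> Obj C \<and>
     (\<exists>\<tau> \<in> Aut C (fst \<mu>). snd \<mu> =
        {\<kappa> \<in> Aut C (fst \<mu>). \<exists>\<rho> \<in> Aut C (fst \<mu>). Comp C \<kappa> \<rho> = Comp C \<rho> \<tau>})"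

definition binom_set :: "('o, 'm) cat \<Rightarrow> 'o \<Rightarrow> 'o \<Rightarrow> 'm set set" where
  "binom_set C d c = (\<lambda>f. {Comp C f \<psi> | \<psi>. \<psi> \<in> Aut C c}) ` hom C c d"

definition binomX :: "('o, 'm) cat \<Rightarrow> 'o \<times> 'm set \<Rightarrow> 'o \<Rightarrow> 'm \<Rightarrow> complex" where
  "binomX C \<mu> d \<sigma> = of_nat (card {B \<in> binom_set C d (fst \<mu>).
       \<exists>f \<in> B. \<exists>\<psi> \<in> snd \<mu>. Comp C \<sigma> f = Comp C f \<psi>})"

definition char_poly :: "('o, 'm) cat \<Rightarrow> ('o \<Rightarrow> 'm \<Rightarrow> complex) \<Rightarrow> bool" where
  "char_poly C P \<longleftrightarrow> (\<exists>S a. finite S \<and> (\<forall>\<mu> \<in> S. conj_class C \<mu>) \<and>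
     (\<forall>d \<in> Obj C. \<forall>\<sigma> \<in> Aut C d. P d \<sigma> = (\<Sum>\<mu> \<in> S. a \<mu> * binomX C \<mu> d \<sigma>)))"

definition char_poly_deg_le :: "('o, 'm) cat \<Rightarrow> ('o \<Rightarrow> 'm \<Rightarrow> complex) \<Rightarrow> 'o \<Rightarrow> bool" where
  "char_poly_deg_le C P e \<longleftrightarrow> (\<exists>S a. finite S \<and> (\<forall>\<mu> \<in> S. conj_class C \<mu>) \<and>
     (\<forall>\<mu> \<in> S. a \<mu> \<noteq> 0 \<longrightarrow> obj_le C (fst \<mu>) e) \<and>
     (\<forall>d \<in> Obj C. \<forall>\<sigma> \<in> Aut C d. P d \<sigma> = (\<Sum>\<mu> \<in> S. a \<mu> * binomX C \<mu> d \<sigma>)))"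

text \<open>\<open>d \<ge> c1 + c2\<close>: every weak push-out object of any span \<open>c1 \<leftarrow> p \<rightarrow> c2\<close> is \<open>\<le> d\<close>.\<close>
definition geq_sum :: "('o, 'm) cat \<Rightarrow> 'o \<Rightarrow> 'o \<Rightarrow> 'o \<Rightarrow> bool" where
  "geq_sum C d c1 c2 \<longleftrightarrow> d \<in> Obj C \<and>
     (\<forall>p \<in> Obj C. \<forall>f1 \<in> hom C p c1. \<forall>f2 \<in> hom C p c2. \<forall>w g1 g2.
        is_weak_pushout C f1 f2 w g1 g2 \<longrightarrow> obj_le C w d)"

end

theory Submission
  imports Defs
begin

text \<open>
  For \<open>\<tau>\<close> in a conjugacy class \<open>\<mu>\<close> of \<open>G\<^sub>c\<close>, the number of \<open>f : c \<rightarrow> d\<close> with \<open>\<sigma> f = f \<tau>\<close> equals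
  \<open>|Z(\<tau>)| \<cdot> binomX \<mu> \<sigma>\<close> (orbit counting). Hence a product of two functions \<open>binomX\<close> is, up to a
  nonzero constant, the number of pairs \<open>(f\<^sub>1, f\<^sub>2)\<close> of such equivariant maps. Each pair has a
  pullback span \<open>c\<^sub>1 \<leftarrow> p \<rightarrow> c\<^sub>2\<close>, unique up to isomorphism of \<open>p\<close>, so summing over the spans
  with \<open>p\<close> in a finite set of representatives, with suitable weights, counts every pair once.
  The pairs with a given pullback span correspond, through the weak push-out \<open>c\<^sub>1 \<rightarrow> w \<leftarrow> c\<^sub>2\<close> of
  the span, to morphisms \<open>h : w \<rightarrow> d\<close>; these exist only if \<open>\<tau>\<^sub>1, \<tau>\<^sub>2\<close> induce an endomorphism
  \<open>\<alpha>\<close> of \<open>w\<close>, and then the condition on \<open>h\<close> is \<open>\<sigma> h = h \<alpha>\<close>. So the product is a linear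
  combination of functions \<open>binomX\<close> attached to weak push-outs \<open>w\<close>, which gives both the
  closure under products and the degree bound.
\<close>

lemma of_nat_card_filter_eq_sum:
  "finite A \<Longrightarrow> (of_nat (card {x \<in> A. P x}) :: 'a::semiring_1) = (\<Sum>x\<in>A. if P x then 1 else 0)"
  by (simp add: sum.inter_filter[symmetric])

section \<open>Categories, isomorphisms and pullbacks\<close>

locale small_category =
  fixes C :: "('o, 'm) cat"
  assumes is_category: "is_category C"
begin

lemma mem_hom: "f \<in> hom C a b \<longleftrightarrow> f \<in> Mor C \<and> Dom C f = a \<and> Cod C f = b"
  by (simp add: hom_def)

lemma dom_cod_obj: "f \<in> Mor C \<Longrightarrow> Dom C f \<in> Obj C \<and> Cod C f \<in> Obj C"
  using is_category unfolding is_category_def by blast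

lemma comp_closed:
  "f \<in> Mor C \<Longrightarrow> g \<in> Mor C \<Longrightarrow> Dom C g = Cod C f \<Longrightarrow>
   Comp C g f \<in> Mor C \<and> Dom C (Comp C g f) = Dom C f \<and> Cod C (Comp C g f) = Cod C g"
  using is_category unfolding is_category_def hom_def by blast

lemma comp_mor [simp]: "f \<in> Mor C \<Longrightarrow> g \<in> Mor C \<Longrightarrow> Dom C g = Cod C f \<Longrightarrow> Comp C g f \<in> Mor C"
  and comp_dom [simp]: "f \<in> Mor C \<Longrightarrow> g \<in> Mor C \<Longrightarrow> Dom C g = Cod C f \<Longrightarrow> Dom C (Comp C g f) = Dom C f"
  and comp_cod [simp]: "f \<in> Mor C \<Longrightarrow> g \<in> Mor C \<Longrightarrow> Dom C g = Cod C f \<Longrightarrow> Cod C (Comp C g f) = Cod C g"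
  using comp_closed by blast+

lemma comp_assoc [simp]:
  "f \<in> Mor C \<Longrightarrow> g \<in> Mor C \<Longrightarrow> h \<in> Mor C \<Longrightarrow> Dom C g = Cod C f \<Longrightarrow> Dom C h = Cod C g \<Longrightarrow>
   Comp C (Comp C h g) f = Comp C h (Comp C g f)"
  using is_category unfolding is_category_def by metis

lemma id_closed: "c \<in> Obj C \<Longrightarrow> Id C c \<in> Mor C \<and> Dom C (Id C c) = c \<and> Cod C (Id C c) = c"
  using is_category unfolding is_category_def hom_def by blast

lemma id_mor [simp]: "c \<in> Obj C \<Longrightarrow> Id C c \<in> Mor C"
  and id_dom [simp]: "c \<in> Obj C \<Longrightarrow> Dom C (Id C c) = c"
  and id_cod [simp]: "c \<in> Obj C \<Longrightarrow> Cod C (Id C c) = c"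
  using id_closed by blast+

lemma id_left [simp]: "f \<in> Mor C \<Longrightarrow> Cod C f = c \<Longrightarrow> Comp C (Id C c) f = f"
  and id_right [simp]: "f \<in> Mor C \<Longrightarrow> Dom C f = c \<Longrightarrow> Comp C f (Id C c) = f"
  using is_category unfolding is_category_def by blast+

lemma id_in_hom: "c \<in> Obj C \<Longrightarrow> Id C c \<in> hom C c c"
  by (simp add: mem_hom)

lemma comp_eq_extend:
  assumes "Comp C a b = Comp C c e" "a \<in> Mor C" "b \<in> Mor C" "c \<in> Mor C" "e \<in> Mor C" "x \<in> Mor C"
    "Dom C a = Cod C b" "Dom C c = Cod C e" "Dom C b = Cod C x" "Dom C e = Cod C x"
  shows "Comp C a (Comp C b x) = Comp C c (Comp C e x)"
  using assms by (metis comp_assoc)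

lemma comp_inverse_cancel:
  assumes "Comp C a b = Id C c" "a \<in> Mor C" "b \<in> Mor C" "x \<in> Mor C"
    "Dom C a = Cod C b" "Dom C b = Cod C x" "Cod C x = c"
  shows "Comp C a (Comp C b x) = x"
  using assms by (metis comp_assoc id_left)

lemma comp_eq_extend3:
  assumes "Comp C a (Comp C b c) = Comp C u (Comp C v t)" "a \<in> Mor C" "b \<in> Mor C" "c \<in> Mor C"
    "u \<in> Mor C" "v \<in> Mor C" "t \<in> Mor C" "x \<in> Mor C"
    "Dom C a = Cod C b" "Dom C b = Cod C c" "Dom C u = Cod C v" "Dom C v = Cod C t"
    "Dom C c = Cod C x" "Dom C t = Cod C x"
  shows "Comp C a (Comp C b (Comp C c x)) = Comp C u (Comp C v (Comp C t x))"
proof -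
  have "Comp C a (Comp C b (Comp C c x)) = Comp C (Comp C a (Comp C b c)) x"
    using assms(2-) by simp
  also have "\<dots> = Comp C (Comp C u (Comp C v t)) x" using assms(1) by simp
  also have "\<dots> = Comp C u (Comp C v (Comp C t x))" using assms(2-) by simp
  finally show ?thesis .
qed

definition iso_pair :: "'o \<Rightarrow> 'o \<Rightarrow> 'm \<Rightarrow> 'm \<Rightarrow> bool" where
  "iso_pair p q \<phi> \<phi>' \<longleftrightarrow> \<phi> \<in> hom C p q \<and> \<phi>' \<in> hom C q p \<and>
     Comp C \<phi>' \<phi> = Id C p \<and> Comp C \<phi> \<phi>' = Id C q"

lemma obj_iso_iff_iso_pair: "obj_iso C p q \<longleftrightarrow> (\<exists>\<phi> \<phi>'. iso_pair p q \<phi> \<phi>')"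
  unfolding obj_iso_def is_iso_def iso_pair_def hom_def by auto

lemma iso_pair_sym: "iso_pair p q \<phi> \<phi>' \<Longrightarrow> iso_pair q p \<phi>' \<phi>"
  unfolding iso_pair_def by auto

lemma iso_pair_obj: "iso_pair p q \<phi> \<phi>' \<Longrightarrow> p \<in> Obj C \<and> q \<in> Obj C"
  unfolding iso_pair_def mem_hom using dom_cod_obj by blast

lemma iso_pair_comp:
  assumes "iso_pair p q \<phi> \<phi>'" "iso_pair q r \<chi> \<chi>'"
  shows "iso_pair p r (Comp C \<chi> \<phi>) (Comp C \<phi>' \<chi>')"
proof -
  have o: "p \<in> Obj C" "q \<in> Obj C" "r \<in> Obj C" using iso_pair_obj assms by blast+
  have m: "\<phi> \<in> Mor C" "Dom C \<phi> = p" "Cod C \<phi> = q" "\<phi>' \<in> Mor C" "Dom C \<phi>' = q" "Cod C \<phi>' = p"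
      "\<chi> \<in> Mor C" "Dom C \<chi> = q" "Cod C \<chi> = r" "\<chi>' \<in> Mor C" "Dom C \<chi>' = r" "Cod C \<chi>' = q"
    using assms unfolding iso_pair_def mem_hom by auto
  have e: "Comp C \<phi>' \<phi> = Id C p" "Comp C \<phi> \<phi>' = Id C q" "Comp C \<chi>' \<chi> = Id C q" "Comp C \<chi> \<chi>' = Id C r"
    using assms unfolding iso_pair_def by auto
  show ?thesis unfolding iso_pair_def mem_hom
    using m o by (simp add: comp_inverse_cancel[OF e(3)] comp_inverse_cancel[OF e(2)] e(1) e(4))
qed

lemma obj_iso_sym: "obj_iso C p q \<Longrightarrow> obj_iso C q p"
  using obj_iso_iff_iso_pair iso_pair_sym by metis

lemma obj_iso_trans: "obj_iso C p q \<Longrightarrow> obj_iso C q r \<Longrightarrow> obj_iso C p r"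
  using obj_iso_iff_iso_pair iso_pair_comp by metis

lemma is_pullbackD:
  assumes "is_pullback C f1 f2 p g1 g2"
  shows "f1 \<in> Mor C" "f2 \<in> Mor C" "Cod C f1 = Cod C f2" "p \<in> Obj C"
    "g1 \<in> Mor C" "Dom C g1 = p" "Cod C g1 = Dom C f1" "g2 \<in> Mor C" "Dom C g2 = p" "Cod C g2 = Dom C f2"
    "Comp C f1 g1 = Comp C f2 g2"
  using assms unfolding is_pullback_def hom_def by auto

lemma is_pullback_universal:
  assumes "is_pullback C f1 f2 p g1 g2" "z \<in> Obj C" "h1 \<in> hom C z (Dom C f1)" "h2 \<in> hom C z (Dom C f2)"
    "Comp C f1 h1 = Comp C f2 h2"
  shows "\<exists>!h. h \<in> hom C z p \<and> Comp C g1 h = h1 \<and> Comp C g2 h = h2"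
  using assms unfolding is_pullback_def by blast

lemma is_weak_pushoutD:
  assumes "is_weak_pushout C f1 f2 d g1 g2"
  shows "f1 \<in> Mor C" "f2 \<in> Mor C" "Dom C f1 = Dom C f2" "d \<in> Obj C"
    "g1 \<in> hom C (Cod C f1) d" "g2 \<in> hom C (Cod C f2) d" "is_pullback C g1 g2 (Dom C f1) f1 f2"
  using assms unfolding is_weak_pushout_def by auto

lemma is_weak_pushout_universal:
  assumes "is_weak_pushout C f1 f2 d g1 g2" "z \<in> Obj C" "h1 \<in> hom C (Cod C f1) z"
    "h2 \<in> hom C (Cod C f2) z" "is_pullback C h1 h2 (Dom C f1) f1 f2"
  shows "\<exists>!h. h \<in> hom C d z \<and> Comp C h g1 = h1 \<and> Comp C h g2 = h2"
  using assms unfolding is_weak_pushout_def by blast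

lemma ex1_unique: "\<exists>!h. P h \<Longrightarrow> P x \<Longrightarrow> P y \<Longrightarrow> x = y"
  by blast

lemma pullback_unique_up_to_iso:
  assumes pq: "is_pullback C f1 f2 q b1 b2" and pp: "is_pullback C f1 f2 p a1 a2"
  shows "\<exists>\<phi> \<phi>'. iso_pair p q \<phi> \<phi>' \<and> a1 = Comp C b1 \<phi> \<and> a2 = Comp C b2 \<phi>"
proof -
  note Dq = is_pullbackD[OF pq] and Dp = is_pullbackD[OF pp]
  have self: "Id C x \<in> hom C x x \<and> Comp C k1 (Id C x) = k1 \<and> Comp C k2 (Id C x) = k2"
    if "is_pullback C f1 f2 x k1 k2" for x k1 k2
    using is_pullbackD[OF that] by (auto simp: mem_hom)
  obtain \<phi> where ph: "\<phi> \<in> hom C p q" "Comp C b1 \<phi> = a1" "Comp C b2 \<phi> = a2"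
    using is_pullback_universal[OF pq, of p a1 a2] Dp by (auto simp: mem_hom)
  obtain \<psi> where ps: "\<psi> \<in> hom C q p" "Comp C a1 \<psi> = b1" "Comp C a2 \<psi> = b2"
    using is_pullback_universal[OF pp, of q b1 b2] Dq by (auto simp: mem_hom)
  have "Comp C \<phi> \<psi> = Id C q"
  proof (rule ex1_unique[OF is_pullback_universal[OF pq, of q b1 b2]])
    show "Comp C \<phi> \<psi> \<in> hom C q q \<and> Comp C b1 (Comp C \<phi> \<psi>) = b1 \<and> Comp C b2 (Comp C \<phi> \<psi>) = b2"
      using ph ps Dq Dp by (auto simp: mem_hom simp flip: comp_assoc)
  qed (use Dq self[OF pq] in \<open>auto simp: mem_hom\<close>)
  moreover have "Comp C \<psi> \<phi> = Id C p"
  proof (rule ex1_unique[OF is_pullback_universal[OF pp, of p a1 a2]])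
    show "Comp C \<psi> \<phi> \<in> hom C p p \<and> Comp C a1 (Comp C \<psi> \<phi>) = a1 \<and> Comp C a2 (Comp C \<psi> \<phi>) = a2"
      using ph ps Dq Dp by (auto simp: mem_hom simp flip: comp_assoc)
  qed (use Dp self[OF pp] in \<open>auto simp: mem_hom\<close>)
  ultimately have "iso_pair p q \<phi> \<psi>" unfolding iso_pair_def using ph ps by auto
  then show ?thesis using ph by metis
qed

lemma pullback_cospan_cong:
  assumes pb: "is_pullback C g1 g2 p a1 a2"
    and f: "f1 \<in> Mor C" "f2 \<in> Mor C" "Dom C f1 = Dom C g1" "Dom C f2 = Dom C g2" "Cod C f1 = Cod C f2"
    and eq: "\<And>k1 k2. k1 \<in> Mor C \<Longrightarrow> k2 \<in> Mor C \<Longrightarrow> Cod C k1 = Dom C g1 \<Longrightarrow>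
      Cod C k2 = Dom C g2 \<Longrightarrow> Dom C k1 = Dom C k2 \<Longrightarrow>
      Comp C f1 k1 = Comp C f2 k2 \<longleftrightarrow> Comp C g1 k1 = Comp C g2 k2"
  shows "is_pullback C f1 f2 p a1 a2"
  unfolding is_pullback_def
proof (intro conjI ballI impI)
  note D = is_pullbackD[OF pb]
  show "f1 \<in> Mor C" "f2 \<in> Mor C" "Cod C f1 = Cod C f2" "p \<in> Obj C"
    "a1 \<in> hom C p (Dom C f1)" "a2 \<in> hom C p (Dom C f2)"
    using D f by (auto simp: mem_hom)
  show "Comp C f1 a1 = Comp C f2 a2" using eq[of a1 a2] D by simp
next
  fix z h1 h2 assume z: "z \<in> Obj C" and h: "h1 \<in> hom C z (Dom C f1)" "h2 \<in> hom C z (Dom C f2)"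
    and "Comp C f1 h1 = Comp C f2 h2"
  then have "Comp C g1 h1 = Comp C g2 h2" using eq[of h1 h2] f by (auto simp: mem_hom)
  then show "\<exists>!h. h \<in> hom C z p \<and> Comp C a1 h = h1 \<and> Comp C a2 h = h2"
    using is_pullback_universal[OF pb z] h f by simp
qed

lemma pullback_transport:
  assumes pq: "is_pullback C f1 f2 q b1 b2" and ip: "iso_pair p q \<phi> \<phi>'"
  shows "is_pullback C f1 f2 p (Comp C b1 \<phi>) (Comp C b2 \<phi>)"
proof -
  note Dq = is_pullbackD[OF pq]
  have a: "\<phi> \<in> Mor C" "Dom C \<phi> = p" "Cod C \<phi> = q" "\<phi>' \<in> Mor C" "Dom C \<phi>' = q" "Cod C \<phi>' = p"
    "Comp C \<phi>' \<phi> = Id C p" "Comp C \<phi> \<phi>' = Id C q"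
    using ip unfolding iso_pair_def mem_hom by auto
  have o: "p \<in> Obj C" "q \<in> Obj C" using iso_pair_obj[OF ip] by auto
  show ?thesis
    unfolding is_pullback_def
  proof (intro conjI ballI impI)
    show "f1 \<in> Mor C" "f2 \<in> Mor C" "Cod C f1 = Cod C f2" "p \<in> Obj C"
      "Comp C b1 \<phi> \<in> hom C p (Dom C f1)" "Comp C b2 \<phi> \<in> hom C p (Dom C f2)"
      using Dq a o by (auto simp: mem_hom)
    show "Comp C f1 (Comp C b1 \<phi>) = Comp C f2 (Comp C b2 \<phi>)"
      using Dq a by (simp add: comp_eq_extend[OF Dq(11)])
  next
    fix z k1 k2
    assume z: "z \<in> Obj C" and k: "k1 \<in> hom C z (Dom C f1)" "k2 \<in> hom C z (Dom C f2)"
      and e: "Comp C f1 k1 = Comp C f2 k2"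
    obtain j where j: "j \<in> hom C z q" "Comp C b1 j = k1" "Comp C b2 j = k2"
      and ju: "\<And>j'. j' \<in> hom C z q \<Longrightarrow> Comp C b1 j' = k1 \<Longrightarrow> Comp C b2 j' = k2 \<Longrightarrow> j' = j"
      using is_pullback_universal[OF pq z k e] by metis
    show "\<exists>!h. h \<in> hom C z p \<and> Comp C (Comp C b1 \<phi>) h = k1 \<and> Comp C (Comp C b2 \<phi>) h = k2"
    proof (rule ex1I[of _ "Comp C \<phi>' j"])
      show "Comp C \<phi>' j \<in> hom C z p \<and> Comp C (Comp C b1 \<phi>) (Comp C \<phi>' j) = k1 \<and>
          Comp C (Comp C b2 \<phi>) (Comp C \<phi>' j) = k2"
        using j a Dq o by (simp add: mem_hom comp_inverse_cancel[OF a(8)])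
    next
      fix h assume h: "h \<in> hom C z p \<and> Comp C (Comp C b1 \<phi>) h = k1 \<and> Comp C (Comp C b2 \<phi>) h = k2"
      then have hh: "h \<in> Mor C" "Dom C h = z" "Cod C h = p"
        and "Comp C b1 (Comp C \<phi> h) = k1" "Comp C b2 (Comp C \<phi> h) = k2"
        using a Dq by (auto simp: mem_hom)
      moreover have "Comp C \<phi> h \<in> hom C z q" using hh a by (simp add: mem_hom)
      ultimately have "Comp C \<phi> h = j" using ju by blast
      then have "Comp C \<phi>' (Comp C \<phi> h) = Comp C \<phi>' j" by simp
      then show "h = Comp C \<phi>' j" using hh a o by (simp add: comp_inverse_cancel[OF a(7)])
    qed
  qed
qed

end

locale fi_category = small_category C for C :: "('o, 'm) cat" +
  assumes FI_type: "FI_type C"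
begin

lemma hom_finite: "finite (hom C a b)"
proof (cases "a \<in> Obj C \<and> b \<in> Obj C")
  case True
  then show ?thesis using FI_type unfolding FI_type_def by blast
next
  case False
  then have "hom C a b = {}" using dom_cod_obj by (auto simp: mem_hom)
  then show ?thesis by simp
qed

lemma mono_cancel [simp]:
  "f \<in> Mor C \<Longrightarrow> g \<in> Mor C \<Longrightarrow> h \<in> Mor C \<Longrightarrow> Cod C g = Dom C f \<Longrightarrow> Cod C h = Dom C f \<Longrightarrow>
   Dom C g = Dom C h \<Longrightarrow> Comp C f g = Comp C f h \<longleftrightarrow> g = h"
  using FI_type unfolding FI_type_def is_mono_def by blast

lemma endo_is_iso:
  assumes "f \<in> hom C c c"
  shows "is_iso C f"
proof -
  have "c \<in> Obj C" using assms dom_cod_obj by (auto simp: mem_hom)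
  then show ?thesis using assms FI_type unfolding FI_type_def by blast
qed

lemma Aut_eq_hom: "Aut C c = hom C c c"
  using endo_is_iso unfolding Aut_def by auto

lemma endo_iso_pair:
  assumes "\<rho> \<in> hom C c c"
  obtains \<rho>' where "iso_pair c c \<rho> \<rho>'"
  using endo_is_iso[OF assms] assms unfolding is_iso_def iso_pair_def by (auto simp: mem_hom)

lemma exists_pullback:
  "f1 \<in> Mor C \<Longrightarrow> f2 \<in> Mor C \<Longrightarrow> Cod C f1 = Cod C f2 \<Longrightarrow> \<exists>p g1 g2. is_pullback C f1 f2 p g1 g2"
  using FI_type unfolding FI_type_def by blast

lemma exists_weak_pushout:
  "f1 \<in> Mor C \<Longrightarrow> f2 \<in> Mor C \<Longrightarrow> Dom C f1 = Dom C f2 \<Longrightarrow> \<exists>d g1 g2. is_weak_pushout C f1 f2 d g1 g2"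
  using FI_type unfolding FI_type_def by blast

lemma finite_iso_representatives:
  "d \<in> Obj C \<Longrightarrow> \<exists>F. finite F \<and> F \<subseteq> Obj C \<and>
     (\<forall>c \<in> Obj C. hom C c d \<noteq> {} \<longrightarrow> (\<exists>c' \<in> F. obj_iso C c c'))"
  using FI_type unfolding FI_type_def by blast

lemma pullback_postcomp:
  assumes pb: "is_pullback C g1 g2 p a1 a2" and m: "m \<in> Mor C" "Dom C m = Cod C g1"
  shows "is_pullback C (Comp C m g1) (Comp C m g2) p a1 a2"
  using is_pullbackD[OF pb] m by (intro pullback_cospan_cong[OF pb]) simp_all

section \<open>Equivariant morphisms and the functions \<open>binomX\<close>\<close>

lemma conj_class_subset_hom: "conj_class C \<mu> \<Longrightarrow> snd \<mu> \<subseteq> hom C (fst \<mu>) (fst \<mu>)"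
  unfolding conj_class_def Aut_eq_hom by blast

lemma conj_class_nonempty:
  assumes "conj_class C \<mu>"
  obtains \<tau> where "\<tau> \<in> snd \<mu>"
proof -
  obtain \<tau> where t: "\<tau> \<in> hom C (fst \<mu>) (fst \<mu>)"
    and e: "snd \<mu> = {\<kappa> \<in> hom C (fst \<mu>) (fst \<mu>). \<exists>\<rho> \<in> hom C (fst \<mu>) (fst \<mu>). Comp C \<kappa> \<rho> = Comp C \<rho> \<tau>}"
    using assms unfolding conj_class_def Aut_eq_hom by blast
  have "fst \<mu> \<in> Obj C" using assms conj_class_def by blast
  then have "\<tau> \<in> snd \<mu>" using t unfolding e by (auto intro!: bexI[of _ "Id C (fst \<mu>)"] simp: mem_hom)
  then show ?thesis by (rule that)
qed

lemma conj_class_conjugate: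
  assumes "conj_class C \<mu>" "\<tau> \<in> snd \<mu>" "\<psi> \<in> snd \<mu>"
  shows "\<exists>\<rho> \<in> hom C (fst \<mu>) (fst \<mu>). Comp C \<psi> \<rho> = Comp C \<rho> \<tau>"
proof -
  define c where "c = fst \<mu>"
  obtain \<tau>0 where t0: "\<tau>0 \<in> hom C c c"
    and sm: "snd \<mu> = {\<kappa> \<in> hom C c c. \<exists>\<rho> \<in> hom C c c. Comp C \<kappa> \<rho> = Comp C \<rho> \<tau>0}"
    using assms(1) unfolding conj_class_def c_def Aut_eq_hom by blast
  obtain \<rho>0 where r0: "\<rho>0 \<in> hom C c c" "Comp C \<tau> \<rho>0 = Comp C \<rho>0 \<tau>0" and t: "\<tau> \<in> hom C c c"
    using assms(2) sm by blast
  obtain \<rho>1 where r1: "\<rho>1 \<in> hom C c c" "Comp C \<psi> \<rho>1 = Comp C \<rho>1 \<tau>0" and p: "\<psi> \<in> hom C c c"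
    using assms(3) sm by blast
  obtain \<rho>0' where i: "iso_pair c c \<rho>0 \<rho>0'" using endo_iso_pair r0(1) by blast
  then have i: "\<rho>0' \<in> Mor C" "Dom C \<rho>0' = c" "Cod C \<rho>0' = c"
    "Comp C \<rho>0' \<rho>0 = Id C c" "Comp C \<rho>0 \<rho>0' = Id C c"
    unfolding iso_pair_def mem_hom by auto
  have c: "c \<in> Obj C" using t dom_cod_obj unfolding mem_hom by blast
  have "Comp C \<tau>0 \<rho>0' = Comp C \<rho>0' (Comp C \<rho>0 (Comp C \<tau>0 \<rho>0'))"
    using i t0 r0 c by (simp add: mem_hom flip: comp_assoc)
  also have "\<dots> = Comp C \<rho>0' (Comp C (Comp C \<tau> \<rho>0) \<rho>0')"
    using i t0 r0 c t by (simp add: mem_hom)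
  also have "\<dots> = Comp C \<rho>0' \<tau>"
    using i t0 r0(1) c t by (simp add: mem_hom)
  finally have e: "Comp C \<tau>0 \<rho>0' = Comp C \<rho>0' \<tau>" .
  have "Comp C \<psi> (Comp C \<rho>1 \<rho>0') = Comp C (Comp C \<psi> \<rho>1) \<rho>0'"
    using i r1(1) p by (simp add: mem_hom)
  also have "\<dots> = Comp C \<rho>1 (Comp C \<tau>0 \<rho>0')" using i r1 p t0 by (simp add: mem_hom)
  also have "\<dots> = Comp C (Comp C \<rho>1 \<rho>0') \<tau>" using i r1 p t0 t e by (simp add: mem_hom)
  finally have "Comp C \<psi> (Comp C \<rho>1 \<rho>0') = Comp C (Comp C \<rho>1 \<rho>0') \<tau>" .
  moreover have "Comp C \<rho>1 \<rho>0' \<in> hom C c c" using i r1 by (simp add: mem_hom)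
  ultimately show ?thesis unfolding c_def by blast
qed

definition conj_class_of :: "'o \<Rightarrow> 'm \<Rightarrow> 'm set" where
  "conj_class_of w \<alpha> = {\<kappa> \<in> Aut C w. \<exists>\<rho> \<in> Aut C w. Comp C \<kappa> \<rho> = Comp C \<rho> \<alpha>}"

lemma conj_class_conj_class_of:
  assumes "w \<in> Obj C" "\<alpha> \<in> hom C w w"
  shows "conj_class C (w, conj_class_of w \<alpha>)" "\<alpha> \<in> conj_class_of w \<alpha>"
proof -
  show "conj_class C (w, conj_class_of w \<alpha>)"
    using assms unfolding conj_class_def conj_class_of_def Aut_eq_hom by auto
  show "\<alpha> \<in> conj_class_of w \<alpha>"
    using assms unfolding conj_class_of_def Aut_eq_hom by (auto intro!: bexI[of _ "Id C w"] simp: mem_hom)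
qed

definition equivariant :: "'o \<Rightarrow> 'm \<Rightarrow> 'o \<Rightarrow> 'm \<Rightarrow> 'm set" where
  "equivariant c \<tau> d \<sigma> = {f \<in> hom C c d. Comp C \<sigma> f = Comp C f \<tau>}"

definition centralizer :: "'o \<Rightarrow> 'm \<Rightarrow> 'm set" where
  "centralizer c \<tau> = {\<rho> \<in> hom C c c. Comp C \<rho> \<tau> = Comp C \<tau> \<rho>}"

definition orbit :: "'o \<Rightarrow> 'm \<Rightarrow> 'm set" where
  "orbit c f = {Comp C f \<psi> | \<psi>. \<psi> \<in> Aut C c}"

lemma finite_equivariant: "finite (equivariant c \<tau> d \<sigma>)"
  unfolding equivariant_def using hom_finite by simp

lemma card_centralizer_pos:
  assumes "c \<in> Obj C" "\<tau> \<in> hom C c c"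
  shows "card (centralizer c \<tau>) \<noteq> 0"
proof -
  have "Id C c \<in> centralizer c \<tau>" using assms unfolding centralizer_def by (auto simp: mem_hom)
  moreover have "finite (centralizer c \<tau>)" unfolding centralizer_def using hom_finite by simp
  ultimately show ?thesis by auto
qed

lemma binom_set_eq_orbits: "binom_set C d c = orbit c ` hom C c d"
  unfolding binom_set_def orbit_def by simp

lemma mem_orbit: "f' \<in> orbit c f \<longleftrightarrow> (\<exists>\<psi> \<in> hom C c c. f' = Comp C f \<psi>)"
  unfolding orbit_def Aut_eq_hom by blast

lemma orbit_self: "f \<in> hom C c d \<Longrightarrow> f \<in> orbit c f"
  unfolding mem_orbit by (rule bexI[of _ "Id C c"]) (auto simp: mem_hom dest: dom_cod_obj)

lemma orbit_eq:
  assumes f: "f \<in> hom C c d" and f': "f' \<in> orbit c f"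
  shows "orbit c f' = orbit c f"
proof -
  obtain \<psi> where p: "\<psi> \<in> hom C c c" "f' = Comp C f \<psi>" using f' mem_orbit by blast
  obtain \<psi>' where "iso_pair c c \<psi> \<psi>'" using endo_iso_pair p(1) by blast
  then have i: "\<psi>' \<in> hom C c c" "Comp C \<psi> \<psi>' = Id C c"
    unfolding iso_pair_def by auto
  have c: "c \<in> Obj C" using f dom_cod_obj unfolding mem_hom by blast
  show ?thesis
  proof (rule set_eqI, rule iffI)
    fix x assume "x \<in> orbit c f'"
    then obtain \<chi> where "\<chi> \<in> hom C c c" "x = Comp C f' \<chi>" using mem_orbit by blast
    then have "x = Comp C f (Comp C \<psi> \<chi>)" "Comp C \<psi> \<chi> \<in> hom C c c"
      using p f by (auto simp: mem_hom)
    then show "x \<in> orbit c f" using mem_orbit by blast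
  next
    fix x assume "x \<in> orbit c f"
    then obtain \<chi> where ch: "\<chi> \<in> hom C c c" "x = Comp C f \<chi>" using mem_orbit by blast
    have "Comp C f' (Comp C \<psi>' \<chi>) = Comp C f (Comp C (Comp C \<psi> \<psi>') \<chi>)"
      using p f i ch(1) c by (simp add: mem_hom comp_inverse_cancel[OF i(2)])
    also have "\<dots> = x" using i ch f c by (simp add: mem_hom)
    finally have "x = Comp C f' (Comp C \<psi>' \<chi>)" "Comp C \<psi>' \<chi> \<in> hom C c c"
      using i ch(1) by (auto simp: mem_hom)
    then show "x \<in> orbit c f'" using mem_orbit by blast
  qed
qed

lemma orbits_of_equivariant:
  assumes \<mu>: "conj_class C \<mu>" and \<tau>: "\<tau> \<in> snd \<mu>" and \<sigma>: "\<sigma> \<in> hom C d d"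
  shows "orbit (fst \<mu>) ` equivariant (fst \<mu>) \<tau> d \<sigma> =
    {B \<in> binom_set C d (fst \<mu>). \<exists>f \<in> B. \<exists>\<psi> \<in> snd \<mu>. Comp C \<sigma> f = Comp C f \<psi>}"
    (is "orbit ?c ` ?X = ?good")
proof
  show "orbit ?c ` ?X \<subseteq> ?good"
    unfolding binom_set_eq_orbits equivariant_def using orbit_self \<tau> by blast
next
  show "?good \<subseteq> orbit ?c ` ?X"
  proof
    fix B assume "B \<in> ?good"
    then obtain f0 f \<psi> where B: "f0 \<in> hom C ?c d" "B = orbit ?c f0" "f \<in> B" "\<psi> \<in> snd \<mu>"
      and e: "Comp C \<sigma> f = Comp C f \<psi>"
      unfolding binom_set_eq_orbits by blast
    have f: "f \<in> hom C ?c d" using B mem_orbit by (auto simp: mem_hom)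
    have \<psi>: "\<psi> \<in> hom C ?c ?c" "\<tau> \<in> hom C ?c ?c" using conj_class_subset_hom[OF \<mu>] B(4) \<tau> by blast+
    obtain \<rho> where \<rho>: "\<rho> \<in> hom C ?c ?c" "Comp C \<psi> \<rho> = Comp C \<rho> \<tau>"
      using conj_class_conjugate[OF \<mu> \<tau> B(4)] by blast
    have "Comp C \<sigma> (Comp C f \<rho>) = Comp C (Comp C f \<rho>) \<tau>"
      using f \<rho> \<psi> \<sigma> by (simp add: mem_hom comp_eq_extend[OF e])
    moreover have "Comp C f \<rho> \<in> hom C ?c d" using f \<rho> by (simp add: mem_hom)
    ultimately have "Comp C f \<rho> \<in> ?X" unfolding equivariant_def by blast
    moreover have "orbit ?c (Comp C f \<rho>) = B"
      using orbit_eq[OF f, of "Comp C f \<rho>"] mem_orbit \<rho>(1) orbit_eq[OF B(1)] B by metis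
    ultimately show "B \<in> orbit ?c ` ?X" by blast
  qed
qed

lemma equivariant_orbit_fibre:
  assumes \<tau>: "\<tau> \<in> hom C c c" and \<sigma>: "\<sigma> \<in> hom C d d" and f: "f \<in> equivariant c \<tau> d \<sigma>"
  shows "bij_betw (Comp C f) (centralizer c \<tau>) {x \<in> equivariant c \<tau> d \<sigma>. orbit c x = orbit c f}"
proof (rule bij_betw_imageI)
  have fh: "f \<in> hom C c d" and e: "Comp C \<sigma> f = Comp C f \<tau>" using f equivariant_def by auto
  show "inj_on (Comp C f) (centralizer c \<tau>)"
    by (rule inj_onI) (use fh in \<open>auto simp: centralizer_def mem_hom\<close>)
  show "Comp C f ` centralizer c \<tau> = {x \<in> equivariant c \<tau> d \<sigma>. orbit c x = orbit c f}"
  proof (intro equalityI subsetI)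
    fix x assume "x \<in> Comp C f ` centralizer c \<tau>"
    then obtain \<rho> where \<rho>: "\<rho> \<in> hom C c c" "Comp C \<rho> \<tau> = Comp C \<tau> \<rho>" "x = Comp C f \<rho>"
      unfolding centralizer_def by blast
    have "Comp C \<sigma> x = Comp C x \<tau>"
      using fh \<rho> \<sigma> \<tau> by (simp add: mem_hom comp_eq_extend[OF e])
    moreover have "x \<in> hom C c d" using \<rho> fh by (simp add: mem_hom)
    moreover have "orbit c x = orbit c f" using orbit_eq[OF fh] mem_orbit \<rho> by blast
    ultimately show "x \<in> {x \<in> equivariant c \<tau> d \<sigma>. orbit c x = orbit c f}"
      unfolding equivariant_def by blast
  next
    fix x assume "x \<in> {x \<in> equivariant c \<tau> d \<sigma>. orbit c x = orbit c f}"
    then have xh: "x \<in> hom C c d" and ex: "Comp C \<sigma> x = Comp C x \<tau>" and ox: "orbit c x = orbit c f"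
      unfolding equivariant_def by auto
    obtain \<rho> where \<rho>: "\<rho> \<in> hom C c c" "x = Comp C f \<rho>"
      using ox orbit_self[OF xh] mem_orbit by blast
    have "Comp C f (Comp C \<tau> \<rho>) = Comp C \<sigma> x"
      using fh \<rho> \<sigma> \<tau> by (simp add: mem_hom comp_eq_extend[OF e])
    also have "\<dots> = Comp C f (Comp C \<rho> \<tau>)" using ex fh \<rho> \<tau> by (simp add: mem_hom)
    finally have "Comp C \<tau> \<rho> = Comp C \<rho> \<tau>" using fh \<rho> \<tau> by (simp add: mem_hom)
    then show "x \<in> Comp C f ` centralizer c \<tau>" using \<rho> unfolding centralizer_def by auto
  qed
qed

lemma card_equivariant_eq_binomX:
  assumes \<mu>: "conj_class C \<mu>" and \<tau>: "\<tau> \<in> snd \<mu>" and \<sigma>: "\<sigma> \<in> hom C d d"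
  shows "(of_nat (card (equivariant (fst \<mu>) \<tau> d \<sigma>)) :: complex) =
    of_nat (card (centralizer (fst \<mu>) \<tau>)) * binomX C \<mu> d \<sigma>"
proof -
  define c where "c = fst \<mu>"
  define X where "X = equivariant c \<tau> d \<sigma>"
  have \<tau>c: "\<tau> \<in> hom C c c" using conj_class_subset_hom[OF \<mu>] \<tau> c_def by blast
  have "card X = (\<Sum>B\<in>orbit c ` X. card {x \<in> X. orbit c x = B})"
    using sum.image_gen[OF finite_equivariant[of c \<tau> d \<sigma>], of "\<lambda>_. 1::nat" "orbit c"] unfolding X_def by simp
  also have "\<dots> = (\<Sum>B\<in>orbit c ` X. card (centralizer c \<tau>))"
    using bij_betw_same_card[OF equivariant_orbit_fibre[OF \<tau>c \<sigma>]] unfolding X_def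
    by (intro sum.cong) auto
  also have "\<dots> = card (centralizer c \<tau>) * card (orbit c ` X)" by simp
  finally show ?thesis
    using orbits_of_equivariant[OF \<mu> \<tau> \<sigma>] unfolding X_def c_def binomX_def by simp
qed

section \<open>Counting pairs by their pullback spans\<close>

definition pullback_legs :: "'m \<Rightarrow> 'm \<Rightarrow> 'o \<Rightarrow> ('m \<times> 'm) set" where
  "pullback_legs f1 f2 p =
     {x \<in> hom C p (Dom C f1) \<times> hom C p (Dom C f2). is_pullback C f1 f2 p (fst x) (snd x)}"

lemma pullback_legs_bij:
  assumes pq: "is_pullback C f1 f2 q b1 b2" and ip: "iso_pair p q \<phi> \<phi>'"
  shows "bij_betw (\<lambda>\<rho>. (Comp C b1 (Comp C \<phi> \<rho>), Comp C b2 (Comp C \<phi> \<rho>))) (hom C p p)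
    (pullback_legs f1 f2 p)"
proof (rule bij_betw_imageI)
  note Dq = is_pullbackD[OF pq]
  have a: "\<phi> \<in> Mor C" "Dom C \<phi> = p" "Cod C \<phi> = q" "\<phi>' \<in> Mor C" "Dom C \<phi>' = q" "Cod C \<phi>' = p"
    "Comp C \<phi> \<phi>' = Id C q"
    using ip unfolding iso_pair_def mem_hom by auto
  show "inj_on (\<lambda>\<rho>. (Comp C b1 (Comp C \<phi> \<rho>), Comp C b2 (Comp C \<phi> \<rho>))) (hom C p p)"
    by (rule inj_onI) (use a Dq in \<open>auto simp: mem_hom\<close>)
  show "(\<lambda>\<rho>. (Comp C b1 (Comp C \<phi> \<rho>), Comp C b2 (Comp C \<phi> \<rho>))) ` hom C p p = pullback_legs f1 f2 p"
  proof (intro equalityI subsetI)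
    fix x assume "x \<in> (\<lambda>\<rho>. (Comp C b1 (Comp C \<phi> \<rho>), Comp C b2 (Comp C \<phi> \<rho>))) ` hom C p p"
    then obtain \<rho> where \<rho>: "\<rho> \<in> hom C p p" "x = (Comp C b1 (Comp C \<phi> \<rho>), Comp C b2 (Comp C \<phi> \<rho>))"
      by blast
    obtain \<rho>' where "iso_pair p p \<rho> \<rho>'" using endo_iso_pair[OF \<rho>(1)] .
    from pullback_transport[OF pq iso_pair_comp[OF this ip]]
    have "is_pullback C f1 f2 p (Comp C b1 (Comp C \<phi> \<rho>)) (Comp C b2 (Comp C \<phi> \<rho>))"
      using \<rho> a Dq by (simp add: mem_hom)
    then show "x \<in> pullback_legs f1 f2 p"
      using \<rho> a Dq unfolding pullback_legs_def by (simp add: mem_hom)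
  next
    fix x assume "x \<in> pullback_legs f1 f2 p"
    then have "is_pullback C f1 f2 p (fst x) (snd x)" unfolding pullback_legs_def by simp
    from pullback_unique_up_to_iso[OF pq this] obtain \<chi> \<chi>'
      where \<chi>: "iso_pair p q \<chi> \<chi>'" "fst x = Comp C b1 \<chi>" "snd x = Comp C b2 \<chi>"
      by blast
    have "\<chi> \<in> Mor C" "Dom C \<chi> = p" "Cod C \<chi> = q" using \<chi>(1) unfolding iso_pair_def mem_hom by auto
    then have "Comp C \<phi> (Comp C \<phi>' \<chi>) = \<chi>" "Comp C \<phi>' \<chi> \<in> hom C p p"
      using a by (simp_all add: mem_hom comp_inverse_cancel[OF a(7)])
    then show "x \<in> (\<lambda>\<rho>. (Comp C b1 (Comp C \<phi> \<rho>), Comp C b2 (Comp C \<phi> \<rho>))) ` hom C p p"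
      using \<chi> by (metis (no_types, lifting) image_eqI prod.collapse)
  qed
qed

lemma card_pullback_legs:
  assumes pq: "is_pullback C f1 f2 q b1 b2"
  shows "card (pullback_legs f1 f2 p) = (if obj_iso C p q then card (hom C p p) else 0)"
proof (cases "obj_iso C p q")
  case False
  then have "pullback_legs f1 f2 p = {}"
    using pullback_unique_up_to_iso[OF pq] obj_iso_iff_iso_pair unfolding pullback_legs_def by blast
  then show ?thesis using False by simp
next
  case True
  then obtain \<phi> \<phi>' where "iso_pair p q \<phi> \<phi>'" using obj_iso_iff_iso_pair by blast
  then show ?thesis using True bij_betw_same_card[OF pullback_legs_bij[OF pq]] by simp
qed

definition spans :: "'o set \<Rightarrow> 'o \<Rightarrow> 'o \<Rightarrow> ('o \<times> 'm \<times> 'm) set" where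
  "spans F c1 c2 = Sigma F (\<lambda>p. hom C p c1 \<times> hom C p c2)"

lemma finite_spans: "finite F \<Longrightarrow> finite (spans F c1 c2)"
  unfolding spans_def using hom_finite by (simp add: finite_SigmaI)

text \<open>For a fixed pair of morphisms with pullback \<open>q\<close>, its pullback spans with apex \<open>p \<cong> q\<close> form a
  \<open>G\<^sub>p\<close>-torsor; dividing by \<open>|G\<^sub>p|\<close> and by the number of representatives isomorphic to \<open>p\<close>
  makes their total weight \<open>1\<close>.\<close>

definition span_weight :: "'o set \<Rightarrow> 'o \<Rightarrow> complex" where
  "span_weight F p = 1 / (of_nat (card (hom C p p)) * of_nat (card {r \<in> F. obj_iso C r p}))"

lemma sum_span_weight:
  assumes F: "finite F" "F \<subseteq> Obj C" and q: "\<exists>c' \<in> F. obj_iso C q c'"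
  shows "(\<Sum>p\<in>F. span_weight F p * of_nat (if obj_iso C p q then card (hom C p p) else 0)) = 1"
proof -
  define Fq where "Fq = {p \<in> F. obj_iso C p q}"
  have "Fq \<noteq> {}" using q obj_iso_sym unfolding Fq_def by blast
  have "(\<Sum>p\<in>F. span_weight F p * of_nat (if obj_iso C p q then card (hom C p p) else 0)) =
      (\<Sum>p\<in>F. if obj_iso C p q then 1 / of_nat (card Fq) else 0)"
  proof (rule sum.cong[OF refl])
    fix p assume p: "p \<in> F"
    show "span_weight F p * of_nat (if obj_iso C p q then card (hom C p p) else 0) =
      (if obj_iso C p q then 1 / of_nat (card Fq) else 0)"
    proof (cases "obj_iso C p q")
      case True
      then have "{r \<in> F. obj_iso C r p} = Fq"
        unfolding Fq_def using obj_iso_sym obj_iso_trans by blast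
      moreover have "card (hom C p p) \<noteq> 0"
        using id_in_hom[of p] p F hom_finite[of p p] by (auto simp: card_0_eq)
      ultimately show ?thesis using True unfolding span_weight_def by simp
    qed simp
  qed
  also have "\<dots> = (\<Sum>p\<in>Fq. 1 / of_nat (card Fq))"
    unfolding Fq_def using F by (simp add: sum.inter_filter[symmetric])
  also have "\<dots> = 1" using F \<open>Fq \<noteq> {}\<close> unfolding Fq_def by simp
  finally show ?thesis .
qed

lemma sum_span_weight_pullbacks:
  assumes F: "finite F" "F \<subseteq> Obj C" "\<forall>c\<in>Obj C. hom C c c1 \<noteq> {} \<longrightarrow> (\<exists>c'\<in>F. obj_iso C c c')"
    and f: "f1 \<in> hom C c1 d" "f2 \<in> hom C c2 d"
  shows "(\<Sum>i\<in>spans F c1 c2. span_weight F (fst i) *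
      (if is_pullback C f1 f2 (fst i) (fst (snd i)) (snd (snd i)) then 1 else 0)) = 1"
proof -
  obtain q b1 b2 where pq: "is_pullback C f1 f2 q b1 b2"
    using exists_pullback[of f1 f2] f by (auto simp: mem_hom)
  note Dq = is_pullbackD[OF pq]
  have df: "Dom C f1 = c1" "Dom C f2 = c2" using f by (auto simp: mem_hom)
  have "b1 \<in> hom C q c1" using Dq df by (auto simp: mem_hom)
  then have q: "\<exists>c'\<in>F. obj_iso C q c'" using F(3) Dq(4) by blast
  have "(\<Sum>i\<in>spans F c1 c2. span_weight F (fst i) *
      (if is_pullback C f1 f2 (fst i) (fst (snd i)) (snd (snd i)) then 1 else 0)) =
    (\<Sum>p\<in>F. \<Sum>y\<in>hom C p c1 \<times> hom C p c2.
      span_weight F p * (if is_pullback C f1 f2 p (fst y) (snd y) then 1 else 0))"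
    unfolding spans_def using F(1) hom_finite by (subst sum.Sigma) (auto simp: case_prod_beta)
  also have "\<dots> = (\<Sum>p\<in>F. span_weight F p * of_nat (card (pullback_legs f1 f2 p)))"
    unfolding pullback_legs_def using hom_finite
    by (simp add: of_nat_card_filter_eq_sum sum_distrib_left df)
  also have "\<dots> = 1"
    unfolding card_pullback_legs[OF pq] using sum_span_weight[OF F(1,2) q] .
  finally show ?thesis .
qed

section \<open>Factorisation through weak push-outs\<close>

lemma is_weak_pushout_span:
  assumes "is_weak_pushout C a1 a2 w g1 g2" "a1 \<in> hom C p c1" "a2 \<in> hom C p c2"
  shows "w \<in> Obj C" "g1 \<in> hom C c1 w" "g2 \<in> hom C c2 w" "is_pullback C g1 g2 p a1 a2"
  using is_weak_pushoutD[OF assms(1)] assms(2,3) by (auto simp: mem_hom)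

lemma weak_pushout_jointly_epic:
  assumes wp: "is_weak_pushout C a1 a2 w g1 g2" and a: "a1 \<in> hom C p c1" "a2 \<in> hom C p c2"
    and h: "h \<in> hom C w d" "h' \<in> hom C w d"
    and e: "Comp C h g1 = Comp C h' g1" "Comp C h g2 = Comp C h' g2"
  shows "h = h'"
proof (rule ex1_unique[OF is_weak_pushout_universal[OF wp, of d "Comp C h g1" "Comp C h g2"]])
  note W = is_weak_pushout_span[OF wp a]
  have m: "h \<in> Mor C" "Dom C h = w" "Cod C h = d"
    "g1 \<in> Mor C" "Dom C g1 = c1" "Cod C g1 = w" "g2 \<in> Mor C" "Dom C g2 = c2" "Cod C g2 = w"
    "Dom C a1 = p" "Cod C a1 = c1" "Cod C a2 = c2"
    using h W a by (auto simp: mem_hom)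
  show "d \<in> Obj C" using m dom_cod_obj by metis
  show "Comp C h g1 \<in> hom C (Cod C a1) d" "Comp C h g2 \<in> hom C (Cod C a2) d"
    using m by (simp_all add: mem_hom)
  show "is_pullback C (Comp C h g1) (Comp C h g2) (Dom C a1) a1 a2"
    using pullback_postcomp[OF W(4), of h] m by simp
qed (use h e in simp_all)

definition legwise_equivariant :: "'o \<Rightarrow> 'm \<Rightarrow> 'm \<Rightarrow> 'm \<Rightarrow> 'm \<Rightarrow> 'o \<Rightarrow> 'm \<Rightarrow> 'm set" where
  "legwise_equivariant w g1 g2 \<tau>1 \<tau>2 d \<sigma> = {h \<in> hom C w d.
     Comp C \<sigma> (Comp C h g1) = Comp C (Comp C h g1) \<tau>1 \<and>
     Comp C \<sigma> (Comp C h g2) = Comp C (Comp C h g2) \<tau>2}"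

definition induced_endo :: "'o \<Rightarrow> 'm \<Rightarrow> 'm \<Rightarrow> 'm \<Rightarrow> 'm \<Rightarrow> 'm \<Rightarrow> bool" where
  "induced_endo w g1 g2 \<tau>1 \<tau>2 \<alpha> \<longleftrightarrow>
     \<alpha> \<in> hom C w w \<and> Comp C \<alpha> g1 = Comp C g1 \<tau>1 \<and> Comp C \<alpha> g2 = Comp C g2 \<tau>2"

lemma weak_pushout_factorisation_bij:
  assumes wp: "is_weak_pushout C a1 a2 w g1 g2" and a: "a1 \<in> hom C p c1" "a2 \<in> hom C p c2"
    and d: "d \<in> Obj C"
  shows "bij_betw (\<lambda>h. (Comp C h g1, Comp C h g2)) (legwise_equivariant w g1 g2 \<tau>1 \<tau>2 d \<sigma>)
    {x \<in> equivariant c1 \<tau>1 d \<sigma> \<times> equivariant c2 \<tau>2 d \<sigma>. is_pullback C (fst x) (snd x) p a1 a2}"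
proof (rule bij_betw_imageI)
  note W = is_weak_pushout_span[OF wp a]
  have g: "g1 \<in> Mor C" "Dom C g1 = c1" "Cod C g1 = w" "g2 \<in> Mor C" "Dom C g2 = c2" "Cod C g2 = w"
    "Dom C a1 = p" "Cod C a1 = c1" "Cod C a2 = c2"
    using W a by (auto simp: mem_hom)
  show "inj_on (\<lambda>h. (Comp C h g1, Comp C h g2)) (legwise_equivariant w g1 g2 \<tau>1 \<tau>2 d \<sigma>)"
    using weak_pushout_jointly_epic[OF wp a] unfolding legwise_equivariant_def by (intro inj_onI) simp
  show "(\<lambda>h. (Comp C h g1, Comp C h g2)) ` legwise_equivariant w g1 g2 \<tau>1 \<tau>2 d \<sigma> =
    {x \<in> equivariant c1 \<tau>1 d \<sigma> \<times> equivariant c2 \<tau>2 d \<sigma>. is_pullback C (fst x) (snd x) p a1 a2}"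
  proof (intro equalityI subsetI)
    fix x assume "x \<in> (\<lambda>h. (Comp C h g1, Comp C h g2)) ` legwise_equivariant w g1 g2 \<tau>1 \<tau>2 d \<sigma>"
    then obtain h where h: "h \<in> legwise_equivariant w g1 g2 \<tau>1 \<tau>2 d \<sigma>" "x = (Comp C h g1, Comp C h g2)"
      by blast
    then have "h \<in> hom C w d" unfolding legwise_equivariant_def by simp
    then show "x \<in> {x \<in> equivariant c1 \<tau>1 d \<sigma> \<times> equivariant c2 \<tau>2 d \<sigma>.
        is_pullback C (fst x) (snd x) p a1 a2}"
      using h pullback_postcomp[OF W(4), of h] g
      unfolding legwise_equivariant_def equivariant_def by (simp add: mem_hom)
  next
    fix x assume x: "x \<in> {x \<in> equivariant c1 \<tau>1 d \<sigma> \<times> equivariant c2 \<tau>2 d \<sigma>.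
        is_pullback C (fst x) (snd x) p a1 a2}"
    obtain f1 f2 where xf: "x = (f1, f2)" by fastforce
    have f: "f1 \<in> hom C c1 d" "f2 \<in> hom C c2 d" "Comp C \<sigma> f1 = Comp C f1 \<tau>1"
      "Comp C \<sigma> f2 = Comp C f2 \<tau>2" "is_pullback C f1 f2 p a1 a2"
      using x xf unfolding equivariant_def by auto
    obtain h where h: "h \<in> hom C w d" "Comp C h g1 = f1" "Comp C h g2 = f2"
      using is_weak_pushout_universal[OF wp d, of f1 f2] f g by auto
    then have "h \<in> legwise_equivariant w g1 g2 \<tau>1 \<tau>2 d \<sigma>"
      unfolding legwise_equivariant_def using f by auto
    then show "x \<in> (\<lambda>h. (Comp C h g1, Comp C h g2)) ` legwise_equivariant w g1 g2 \<tau>1 \<tau>2 d \<sigma>"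
      using h xf by blast
  qed
qed

lemma legwise_equivariant_eq_equivariant:
  assumes wp: "is_weak_pushout C a1 a2 w g1 g2" and a: "a1 \<in> hom C p c1" "a2 \<in> hom C p c2"
    and \<sigma>: "\<sigma> \<in> hom C d d" and \<tau>: "\<tau>1 \<in> hom C c1 c1" "\<tau>2 \<in> hom C c2 c2"
    and \<alpha>: "induced_endo w g1 g2 \<tau>1 \<tau>2 \<alpha>"
  shows "legwise_equivariant w g1 g2 \<tau>1 \<tau>2 d \<sigma> = equivariant w \<alpha> d \<sigma>"
proof -
  note W = is_weak_pushout_span[OF wp a]
  have m: "g1 \<in> Mor C" "Dom C g1 = c1" "Cod C g1 = w" "g2 \<in> Mor C" "Dom C g2 = c2" "Cod C g2 = w"
    "\<sigma> \<in> Mor C" "Dom C \<sigma> = d" "Cod C \<sigma> = d" "\<alpha> \<in> Mor C" "Dom C \<alpha> = w" "Cod C \<alpha> = w"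
    "\<tau>1 \<in> Mor C" "Dom C \<tau>1 = c1" "Cod C \<tau>1 = c1" "\<tau>2 \<in> Mor C" "Dom C \<tau>2 = c2" "Cod C \<tau>2 = c2"
    using W \<sigma> \<alpha> \<tau> unfolding induced_endo_def by (auto simp: mem_hom)
  have \<alpha>g: "Comp C \<alpha> g1 = Comp C g1 \<tau>1" "Comp C \<alpha> g2 = Comp C g2 \<tau>2"
    using \<alpha> unfolding induced_endo_def by auto
  \<comment> \<open>both conditions say that \<open>\<sigma> h\<close> and \<open>h \<alpha>\<close> agree on the legs \<open>g\<^sub>1, g\<^sub>2\<close>\<close>
  have legs: "Comp C (Comp C \<sigma> h) g1 = Comp C (Comp C h \<alpha>) g1 \<and> Comp C (Comp C \<sigma> h) g2 = Comp C (Comp C h \<alpha>) g2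
      \<longleftrightarrow> Comp C \<sigma> (Comp C h g1) = Comp C (Comp C h g1) \<tau>1 \<and>
        Comp C \<sigma> (Comp C h g2) = Comp C (Comp C h g2) \<tau>2"
    if "h \<in> hom C w d" for h
    using that m by (simp add: mem_hom \<alpha>g)
  show ?thesis
  proof (intro equalityI subsetI)
    fix h assume h: "h \<in> legwise_equivariant w g1 g2 \<tau>1 \<tau>2 d \<sigma>"
    then have hh: "h \<in> hom C w d" unfolding legwise_equivariant_def by simp
    have "Comp C \<sigma> h = Comp C h \<alpha>"
      using weak_pushout_jointly_epic[OF wp a] legs[OF hh] h hh m
      unfolding legwise_equivariant_def by (simp add: mem_hom)
    then show "h \<in> equivariant w \<alpha> d \<sigma>" unfolding equivariant_def using hh by simp
  next
    fix h assume "h \<in> equivariant w \<alpha> d \<sigma>"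
    then have hh: "h \<in> hom C w d" and e: "Comp C \<sigma> h = Comp C h \<alpha>" unfolding equivariant_def by auto
    then have "Comp C (Comp C \<sigma> h) g1 = Comp C (Comp C h \<alpha>) g1 \<and>
        Comp C (Comp C \<sigma> h) g2 = Comp C (Comp C h \<alpha>) g2"
      by simp
    then show "h \<in> legwise_equivariant w g1 g2 \<tau>1 \<tau>2 d \<sigma>"
      using legs[OF hh] hh unfolding legwise_equivariant_def by blast
  qed
qed

lemma legwise_equivariant_twisted_pullback:
  assumes wp: "is_weak_pushout C a1 a2 w g1 g2" and a: "a1 \<in> hom C p c1" "a2 \<in> hom C p c2"
    and \<sigma>: "\<sigma> \<in> hom C d d" and \<tau>: "\<tau>1 \<in> hom C c1 c1" "\<tau>2 \<in> hom C c2 c2"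
    and h: "h \<in> legwise_equivariant w g1 g2 \<tau>1 \<tau>2 d \<sigma>"
  shows "is_pullback C (Comp C g1 \<tau>1) (Comp C g2 \<tau>2) p a1 a2"
proof -
  note W = is_weak_pushout_span[OF wp a]
  have m: "g1 \<in> Mor C" "Dom C g1 = c1" "Cod C g1 = w" "g2 \<in> Mor C" "Dom C g2 = c2" "Cod C g2 = w"
    "\<sigma> \<in> Mor C" "Dom C \<sigma> = d" "Cod C \<sigma> = d"
    "\<tau>1 \<in> Mor C" "Dom C \<tau>1 = c1" "Cod C \<tau>1 = c1" "\<tau>2 \<in> Mor C" "Dom C \<tau>2 = c2" "Cod C \<tau>2 = c2"
    using W \<sigma> \<tau> by (auto simp: mem_hom)
  have hh: "h \<in> Mor C" "Dom C h = w" "Cod C h = d"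
    and e: "Comp C h (Comp C g1 \<tau>1) = Comp C \<sigma> (Comp C h g1)"
      "Comp C h (Comp C g2 \<tau>2) = Comp C \<sigma> (Comp C h g2)"
    using h m unfolding legwise_equivariant_def by (auto simp: mem_hom)
  show ?thesis
  proof (rule pullback_cospan_cong[OF W(4)])
    fix k1 k2 assume k: "k1 \<in> Mor C" "k2 \<in> Mor C" "Cod C k1 = Dom C g1" "Cod C k2 = Dom C g2"
      "Dom C k1 = Dom C k2"
    \<comment> \<open>\<open>h (g\<^sub>i \<tau>\<^sub>i) = \<sigma> h g\<^sub>i\<close>, and both \<open>h\<close> and \<open>\<sigma>\<close> are monic\<close>
    have "Comp C (Comp C g1 \<tau>1) k1 = Comp C (Comp C g2 \<tau>2) k2 \<longleftrightarrow>
        Comp C h (Comp C g1 (Comp C \<tau>1 k1)) = Comp C h (Comp C g2 (Comp C \<tau>2 k2))"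
      using k hh m by simp
    also have "\<dots> \<longleftrightarrow> Comp C \<sigma> (Comp C h (Comp C g1 k1)) = Comp C \<sigma> (Comp C h (Comp C g2 k2))"
      using comp_eq_extend3[OF e(1), of k1] comp_eq_extend3[OF e(2), of k2] k hh m by simp
    also have "\<dots> \<longleftrightarrow> Comp C g1 k1 = Comp C g2 k2"
      using k hh m by simp
    finally show "Comp C (Comp C g1 \<tau>1) k1 = Comp C (Comp C g2 \<tau>2) k2 \<longleftrightarrow>
      Comp C g1 k1 = Comp C g2 k2" .
  qed (use m in simp_all)
qed

lemma legwise_equivariant_induced_endo:
  assumes wp: "is_weak_pushout C a1 a2 w g1 g2" and a: "a1 \<in> hom C p c1" "a2 \<in> hom C p c2"
    and \<sigma>: "\<sigma> \<in> hom C d d" and \<tau>: "\<tau>1 \<in> hom C c1 c1" "\<tau>2 \<in> hom C c2 c2"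
    and ne: "legwise_equivariant w g1 g2 \<tau>1 \<tau>2 d \<sigma> \<noteq> {}"
  shows "\<exists>\<alpha>. induced_endo w g1 g2 \<tau>1 \<tau>2 \<alpha>"
proof -
  note W = is_weak_pushout_span[OF wp a]
  obtain h where "h \<in> legwise_equivariant w g1 g2 \<tau>1 \<tau>2 d \<sigma>" using ne by blast
  from legwise_equivariant_twisted_pullback[OF wp a \<sigma> \<tau> this]
  have "is_pullback C (Comp C g1 \<tau>1) (Comp C g2 \<tau>2) (Dom C a1) a1 a2"
    using a by (simp add: mem_hom)
  moreover have "Comp C g1 \<tau>1 \<in> hom C (Cod C a1) w" "Comp C g2 \<tau>2 \<in> hom C (Cod C a2) w"
    using W \<tau> a by (auto simp: mem_hom)
  ultimately show ?thesis
    using is_weak_pushout_universal[OF wp W(1)] unfolding induced_endo_def by blast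
qed

section \<open>Linear combinations of the functions \<open>binomX\<close>\<close>

definition binom_combination :: "('o \<Rightarrow> bool) \<Rightarrow> ('o \<Rightarrow> 'm \<Rightarrow> complex) \<Rightarrow> bool" where
  "binom_combination \<Phi> P \<longleftrightarrow> (\<exists>S a. finite S \<and> (\<forall>\<mu>\<in>S. conj_class C \<mu> \<and> \<Phi> (fst \<mu>)) \<and>
     (\<forall>d \<in> Obj C. \<forall>\<sigma> \<in> Aut C d. P d \<sigma> = (\<Sum>\<mu> \<in> S. a \<mu> * binomX C \<mu> d \<sigma>)))"

lemma binom_combinationI:
  assumes "finite I" "\<forall>i\<in>I. conj_class C (\<nu> i) \<and> \<Phi> (fst (\<nu> i))"
    "\<forall>d\<in>Obj C. \<forall>\<sigma>\<in>Aut C d. P d \<sigma> = (\<Sum>i\<in>I. k i * binomX C (\<nu> i) d \<sigma>)"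
  shows "binom_combination \<Phi> P"
  unfolding binom_combination_def
proof (intro exI conjI)
  show "finite (\<nu> ` I)" using assms(1) by simp
  show "\<forall>\<mu>\<in>\<nu> ` I. conj_class C \<mu> \<and> \<Phi> (fst \<mu>)" using assms(2) by blast
  show "\<forall>d\<in>Obj C. \<forall>\<sigma>\<in>Aut C d. P d \<sigma> = (\<Sum>\<mu>\<in>\<nu> ` I. (\<Sum>i\<in>{i \<in> I. \<nu> i = \<mu>}. k i) * binomX C \<mu> d \<sigma>)"
  proof (intro ballI)
    fix d \<sigma> assume "d \<in> Obj C" "\<sigma> \<in> Aut C d"
    then have "P d \<sigma> = (\<Sum>i\<in>I. k i * binomX C (\<nu> i) d \<sigma>)" using assms(3) by blast
    also have "\<dots> = (\<Sum>\<mu>\<in>\<nu> ` I. \<Sum>i\<in>{i \<in> I. \<nu> i = \<mu>}. k i * binomX C (\<nu> i) d \<sigma>)"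
      by (rule sum.image_gen[OF assms(1)])
    also have "\<dots> = (\<Sum>\<mu>\<in>\<nu> ` I. (\<Sum>i\<in>{i \<in> I. \<nu> i = \<mu>}. k i) * binomX C \<mu> d \<sigma>)"
      by (rule sum.cong[OF refl]) (simp add: sum_distrib_right)
    finally show "P d \<sigma> = (\<Sum>\<mu>\<in>\<nu> ` I. (\<Sum>i\<in>{i \<in> I. \<nu> i = \<mu>}. k i) * binomX C \<mu> d \<sigma>)" .
  qed
qed

lemma binom_combination_cong:
  "binom_combination \<Phi> P \<Longrightarrow> (\<And>d \<sigma>. d \<in> Obj C \<Longrightarrow> \<sigma> \<in> Aut C d \<Longrightarrow> P d \<sigma> = Q d \<sigma>) \<Longrightarrow>
   binom_combination \<Phi> Q"
  unfolding binom_combination_def by metis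

lemma binom_combination_mono:
  "binom_combination \<Phi> P \<Longrightarrow> (\<And>c. \<Phi> c \<Longrightarrow> \<Psi> c) \<Longrightarrow> binom_combination \<Psi> P"
  unfolding binom_combination_def by blast

lemma binom_combination_zero: "binom_combination \<Phi> (\<lambda>d \<sigma>. 0)"
  unfolding binom_combination_def by (intro exI[of _ "{}"]) simp

lemma binom_combination_scale:
  assumes "binom_combination \<Phi> P"
  shows "binom_combination \<Phi> (\<lambda>d \<sigma>. z * P d \<sigma>)"
proof -
  obtain S a where "finite S" "\<forall>\<mu>\<in>S. conj_class C \<mu> \<and> \<Phi> (fst \<mu>)"
    "\<forall>d \<in> Obj C. \<forall>\<sigma> \<in> Aut C d. P d \<sigma> = (\<Sum>\<mu> \<in> S. a \<mu> * binomX C \<mu> d \<sigma>)"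
    using assms unfolding binom_combination_def by blast
  then show ?thesis
    unfolding binom_combination_def
    by (intro exI[of _ S] exI[of _ "\<lambda>\<mu>. z * a \<mu>"]) (simp add: sum_distrib_left mult.assoc)
qed

lemma binom_combination_add:
  assumes P: "binom_combination \<Phi> P" and Q: "binom_combination \<Phi> Q"
  shows "binom_combination \<Phi> (\<lambda>d \<sigma>. P d \<sigma> + Q d \<sigma>)"
proof -
  obtain S1 a1 where S1: "finite S1" "\<forall>\<mu>\<in>S1. conj_class C \<mu> \<and> \<Phi> (fst \<mu>)"
    "\<forall>d \<in> Obj C. \<forall>\<sigma> \<in> Aut C d. P d \<sigma> = (\<Sum>\<mu> \<in> S1. a1 \<mu> * binomX C \<mu> d \<sigma>)"
    using P unfolding binom_combination_def by blast
  obtain S2 a2 where S2: "finite S2" "\<forall>\<mu>\<in>S2. conj_class C \<mu> \<and> \<Phi> (fst \<mu>)"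
    "\<forall>d \<in> Obj C. \<forall>\<sigma> \<in> Aut C d. Q d \<sigma> = (\<Sum>\<mu> \<in> S2. a2 \<mu> * binomX C \<mu> d \<sigma>)"
    using Q unfolding binom_combination_def by blast
  show ?thesis
    by (rule binom_combinationI[where I = "S1 <+> S2" and \<nu> = "case_sum id id" and k = "case_sum a1 a2"])
      (use S1 S2 in \<open>auto simp: sum.Plus comp_def\<close>)
qed

lemma binom_combination_sum:
  assumes "finite A" "\<And>x. x \<in> A \<Longrightarrow> binom_combination \<Phi> (P x)"
  shows "binom_combination \<Phi> (\<lambda>d \<sigma>. \<Sum>x\<in>A. P x d \<sigma>)"
  using assms by (induction A rule: finite_induct)
    (simp_all add: binom_combination_zero binom_combination_add)

lemma card_equivariant_product:
  assumes F: "finite F" "F \<subseteq> Obj C" "\<forall>c\<in>Obj C. hom C c c1 \<noteq> {} \<longrightarrow> (\<exists>c'\<in>F. obj_iso C c c')"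
    and d: "d \<in> Obj C"
    and wp: "\<forall>i \<in> spans F c1 c2. is_weak_pushout C (fst (snd i)) (snd (snd i)) (W i) (G1 i) (G2 i)"
  shows "of_nat (card (equivariant c1 \<tau>1 d \<sigma>)) * of_nat (card (equivariant c2 \<tau>2 d \<sigma>)) =
    (\<Sum>i\<in>spans F c1 c2. span_weight F (fst i) *
       of_nat (card (legwise_equivariant (W i) (G1 i) (G2 i) \<tau>1 \<tau>2 d \<sigma>)))"
proof -
  define Pairs where "Pairs = equivariant c1 \<tau>1 d \<sigma> \<times> equivariant c2 \<tau>2 d \<sigma>"
  define pb where "pb x i \<longleftrightarrow> is_pullback C (fst x) (snd x) (fst i) (fst (snd i)) (snd (snd i))" for x i
  have finP: "finite Pairs" unfolding Pairs_def using finite_equivariant by simp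
  have "of_nat (card (equivariant c1 \<tau>1 d \<sigma>)) * of_nat (card (equivariant c2 \<tau>2 d \<sigma>)) =
      (\<Sum>x\<in>Pairs. 1 :: complex)"
    unfolding Pairs_def by (simp add: card_cartesian_product)
  also have "\<dots> = (\<Sum>x\<in>Pairs. \<Sum>i\<in>spans F c1 c2. span_weight F (fst i) * (if pb x i then 1 else 0))"
    using sum_span_weight_pullbacks[OF F] unfolding Pairs_def pb_def equivariant_def
    by (intro sum.cong) auto
  also have "\<dots> = (\<Sum>i\<in>spans F c1 c2. \<Sum>x\<in>Pairs. span_weight F (fst i) * (if pb x i then 1 else 0))"
    by (rule sum.swap)
  also have "\<dots> = (\<Sum>i\<in>spans F c1 c2. span_weight F (fst i) * of_nat (card {x \<in> Pairs. pb x i}))"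
    by (simp add: of_nat_card_filter_eq_sum[OF finP] sum_distrib_left)
  also have "\<dots> = (\<Sum>i\<in>spans F c1 c2. span_weight F (fst i) *
       of_nat (card (legwise_equivariant (W i) (G1 i) (G2 i) \<tau>1 \<tau>2 d \<sigma>)))"
  proof (rule sum.cong[OF refl])
    fix i assume i: "i \<in> spans F c1 c2"
    obtain p a1 a2 where ip: "i = (p, a1, a2)" by (cases i) auto
    have a: "a1 \<in> hom C p c1" "a2 \<in> hom C p c2" using i ip unfolding spans_def by auto
    have "is_weak_pushout C a1 a2 (W i) (G1 i) (G2 i)" using wp i ip by auto
    from bij_betw_same_card[OF weak_pushout_factorisation_bij[OF this a d]]
    show "span_weight F (fst i) * of_nat (card {x \<in> Pairs. pb x i}) =
      span_weight F (fst i) * of_nat (card (legwise_equivariant (W i) (G1 i) (G2 i) \<tau>1 \<tau>2 d \<sigma>))"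
      unfolding Pairs_def pb_def ip by simp
  qed
  finally show ?thesis .
qed

lemma card_legwise_equivariant_eq_binomX:
  assumes wp: "is_weak_pushout C a1 a2 w g1 g2" and a: "a1 \<in> hom C p c1" "a2 \<in> hom C p c2"
    and \<sigma>: "\<sigma> \<in> hom C d d" and \<tau>: "\<tau>1 \<in> hom C c1 c1" "\<tau>2 \<in> hom C c2 c2"
    and \<alpha>: "induced_endo w g1 g2 \<tau>1 \<tau>2 \<alpha>"
  shows "(of_nat (card (legwise_equivariant w g1 g2 \<tau>1 \<tau>2 d \<sigma>)) :: complex) =
    of_nat (card (centralizer w \<alpha>)) * binomX C (w, conj_class_of w \<alpha>) d \<sigma>"
proof -
  have w: "w \<in> Obj C" and \<alpha>w: "\<alpha> \<in> hom C w w"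
    using is_weak_pushout_span(1)[OF wp a] \<alpha> unfolding induced_endo_def by auto
  show ?thesis
    using card_equivariant_eq_binomX[OF conj_class_conj_class_of(1)[OF w \<alpha>w] _ \<sigma>]
      conj_class_conj_class_of(2)[OF w \<alpha>w] legwise_equivariant_eq_equivariant[OF assms]
    by simp
qed

lemma weak_pushout_choice:
  "\<exists>W G1 G2. \<forall>i \<in> spans F c1 c2. is_weak_pushout C (fst (snd i)) (snd (snd i)) (W i) (G1 i) (G2 i)"
proof -
  have "\<forall>i \<in> spans F c1 c2. \<exists>t. is_weak_pushout C (fst (snd i)) (snd (snd i)) (fst t) (fst (snd t)) (snd (snd t))"
    using exists_weak_pushout unfolding spans_def by (fastforce simp: mem_hom)
  then obtain T where "\<forall>i \<in> spans F c1 c2.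
      is_weak_pushout C (fst (snd i)) (snd (snd i)) (fst (T i)) (fst (snd (T i))) (snd (snd (T i)))"
    by metis
  then show ?thesis by (intro exI[of _ "fst \<circ> T"] exI[of _ "fst \<circ> snd \<circ> T"] exI[of _ "snd \<circ> snd \<circ> T"]) simp
qed

definition weak_pushout_object :: "'o \<Rightarrow> 'o \<Rightarrow> 'o \<Rightarrow> bool" where
  "weak_pushout_object c1 c2 w \<longleftrightarrow>
     (\<exists>p f1 f2 g1 g2. f1 \<in> hom C p c1 \<and> f2 \<in> hom C p c2 \<and> is_weak_pushout C f1 f2 w g1 g2)"

lemma sum_legwise_equivariant_eq_binomX:
  assumes F: "finite F"
    and wp: "\<forall>i \<in> spans F c1 c2. is_weak_pushout C (fst (snd i)) (snd (snd i)) (W i) (G1 i) (G2 i)"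
    and \<sigma>: "\<sigma> \<in> hom C d d" and \<tau>: "\<tau>1 \<in> hom C c1 c1" "\<tau>2 \<in> hom C c2 c2"
    and I: "I = {i \<in> spans F c1 c2. \<exists>\<alpha>. induced_endo (W i) (G1 i) (G2 i) \<tau>1 \<tau>2 \<alpha>}"
    and A: "\<forall>i \<in> I. induced_endo (W i) (G1 i) (G2 i) \<tau>1 \<tau>2 (A i)"
  shows "(\<Sum>i\<in>spans F c1 c2. span_weight F (fst i) *
           of_nat (card (legwise_equivariant (W i) (G1 i) (G2 i) \<tau>1 \<tau>2 d \<sigma>))) =
    (\<Sum>i\<in>I. span_weight F (fst i) * of_nat (card (centralizer (W i) (A i))) *
      binomX C (W i, conj_class_of (W i) (A i)) d \<sigma>)"
proof -
  have span: "fst (snd i) \<in> hom C (fst i) c1" "snd (snd i) \<in> hom C (fst i) c2"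
    if "i \<in> spans F c1 c2" for i
    using that unfolding spans_def by auto
  have "(\<Sum>i\<in>spans F c1 c2. span_weight F (fst i) *
           of_nat (card (legwise_equivariant (W i) (G1 i) (G2 i) \<tau>1 \<tau>2 d \<sigma>))) =
    (\<Sum>i\<in>I. span_weight F (fst i) *
           of_nat (card (legwise_equivariant (W i) (G1 i) (G2 i) \<tau>1 \<tau>2 d \<sigma>)))"
  proof (rule sum.mono_neutral_right[OF finite_spans[OF F]])
    show "I \<subseteq> spans F c1 c2" unfolding I by blast
    have "legwise_equivariant (W i) (G1 i) (G2 i) \<tau>1 \<tau>2 d \<sigma> = {}" if i: "i \<in> spans F c1 c2 - I" for i
      using legwise_equivariant_induced_endo[OF wp[rule_format] span \<sigma> \<tau>, of i] i unfolding I by blast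
    then show "\<forall>i\<in>spans F c1 c2 - I. span_weight F (fst i) *
        of_nat (card (legwise_equivariant (W i) (G1 i) (G2 i) \<tau>1 \<tau>2 d \<sigma>)) = 0"
      by simp
  qed
  also have "\<dots> = (\<Sum>i\<in>I. span_weight F (fst i) * of_nat (card (centralizer (W i) (A i))) *
      binomX C (W i, conj_class_of (W i) (A i)) d \<sigma>)"
  proof (rule sum.cong[OF refl])
    fix i assume "i \<in> I"
    then have i: "i \<in> spans F c1 c2" and "induced_endo (W i) (G1 i) (G2 i) \<tau>1 \<tau>2 (A i)"
      using A unfolding I by blast+
    then show "span_weight F (fst i) *
        of_nat (card (legwise_equivariant (W i) (G1 i) (G2 i) \<tau>1 \<tau>2 d \<sigma>)) =
      span_weight F (fst i) * of_nat (card (centralizer (W i) (A i))) *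
        binomX C (W i, conj_class_of (W i) (A i)) d \<sigma>"
      using card_legwise_equivariant_eq_binomX[OF wp[rule_format, OF i] span[OF i] \<sigma> \<tau>]
      by (simp add: mult.assoc)
  qed
  finally show ?thesis .
qed

lemma card_equivariant_product_combination:
  assumes c1: "c1 \<in> Obj C" and \<tau>: "\<tau>1 \<in> hom C c1 c1" "\<tau>2 \<in> hom C c2 c2"
  shows "binom_combination (weak_pushout_object c1 c2)
    (\<lambda>d \<sigma>. of_nat (card (equivariant c1 \<tau>1 d \<sigma>)) * of_nat (card (equivariant c2 \<tau>2 d \<sigma>)))"
proof -
  obtain F where F: "finite F" "F \<subseteq> Obj C" "\<forall>c\<in>Obj C. hom C c c1 \<noteq> {} \<longrightarrow> (\<exists>c'\<in>F. obj_iso C c c')"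
    using finite_iso_representatives[OF c1] by blast
  obtain W G1 G2
    where wp: "\<forall>i \<in> spans F c1 c2. is_weak_pushout C (fst (snd i)) (snd (snd i)) (W i) (G1 i) (G2 i)"
    using weak_pushout_choice by blast
  define I where "I = {i \<in> spans F c1 c2. \<exists>\<alpha>. induced_endo (W i) (G1 i) (G2 i) \<tau>1 \<tau>2 \<alpha>}"
  have "\<forall>i \<in> I. \<exists>\<alpha>. induced_endo (W i) (G1 i) (G2 i) \<tau>1 \<tau>2 \<alpha>" unfolding I_def by blast
  then obtain A where A: "\<forall>i \<in> I. induced_endo (W i) (G1 i) (G2 i) \<tau>1 \<tau>2 (A i)"
    by (rule bchoice[elim_format]) blast
  have finI: "finite I" unfolding I_def using finite_spans[OF F(1)] by simp
  show ?thesis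
  proof (rule binom_combinationI[OF finI, where \<nu> = "\<lambda>i. (W i, conj_class_of (W i) (A i))"
        and k = "\<lambda>i. span_weight F (fst i) * of_nat (card (centralizer (W i) (A i)))"])
    show "\<forall>i\<in>I. conj_class C (W i, conj_class_of (W i) (A i)) \<and>
        weak_pushout_object c1 c2 (fst (W i, conj_class_of (W i) (A i)))"
    proof
      fix i assume "i \<in> I"
      then have i: "i \<in> spans F c1 c2" and "induced_endo (W i) (G1 i) (G2 i) \<tau>1 \<tau>2 (A i)"
        using A unfolding I_def by blast+
      moreover have span: "fst (snd i) \<in> hom C (fst i) c1" "snd (snd i) \<in> hom C (fst i) c2"
        using i unfolding spans_def by auto
      moreover note wpi = wp[rule_format, OF i]
      ultimately show "conj_class C (W i, conj_class_of (W i) (A i)) \<and>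
          weak_pushout_object c1 c2 (fst (W i, conj_class_of (W i) (A i)))"
        using conj_class_conj_class_of(1)[OF is_weak_pushout_span(1)[OF wpi span]]
        unfolding induced_endo_def weak_pushout_object_def by (simp, blast)
    qed
  next
    show "\<forall>d\<in>Obj C. \<forall>\<sigma>\<in>Aut C d.
      of_nat (card (equivariant c1 \<tau>1 d \<sigma>)) * of_nat (card (equivariant c2 \<tau>2 d \<sigma>)) =
      (\<Sum>i\<in>I. span_weight F (fst i) * of_nat (card (centralizer (W i) (A i))) *
        binomX C (W i, conj_class_of (W i) (A i)) d \<sigma>)"
      using card_equivariant_product[OF F _ wp] sum_legwise_equivariant_eq_binomX[OF F(1) wp _ \<tau> I_def A]
      by (simp add: Aut_eq_hom)
  qed
qed

lemma binomX_product_combination: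
  assumes \<mu>1: "conj_class C \<mu>1" and \<mu>2: "conj_class C \<mu>2"
  shows "binom_combination (weak_pushout_object (fst \<mu>1) (fst \<mu>2))
    (\<lambda>d \<sigma>. binomX C \<mu>1 d \<sigma> * binomX C \<mu>2 d \<sigma>)"
proof -
  obtain \<tau>1 \<tau>2 where \<tau>: "\<tau>1 \<in> snd \<mu>1" "\<tau>2 \<in> snd \<mu>2"
    using conj_class_nonempty[OF \<mu>1] conj_class_nonempty[OF \<mu>2] by metis
  have \<tau>h: "\<tau>1 \<in> hom C (fst \<mu>1) (fst \<mu>1)" "\<tau>2 \<in> hom C (fst \<mu>2) (fst \<mu>2)"
    using conj_class_subset_hom \<mu>1 \<mu>2 \<tau> by blast+
  have c: "fst \<mu>1 \<in> Obj C" "fst \<mu>2 \<in> Obj C" using \<mu>1 \<mu>2 conj_class_def by blast+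
  define z where "z = (of_nat (card (centralizer (fst \<mu>1) \<tau>1)) *
    of_nat (card (centralizer (fst \<mu>2) \<tau>2)) :: complex)"
  have "z \<noteq> 0" unfolding z_def using card_centralizer_pos c \<tau>h by simp
  show ?thesis
  proof (rule binom_combination_cong[OF binom_combination_scale[of _ _ "1 / z",
          OF card_equivariant_product_combination[OF c(1) \<tau>h]]])
    fix d \<sigma> assume "d \<in> Obj C" "\<sigma> \<in> Aut C d"
    then have \<sigma>: "\<sigma> \<in> hom C d d" by (simp add: Aut_eq_hom)
    show "1 / z * (of_nat (card (equivariant (fst \<mu>1) \<tau>1 d \<sigma>)) *
        of_nat (card (equivariant (fst \<mu>2) \<tau>2 d \<sigma>))) = binomX C \<mu>1 d \<sigma> * binomX C \<mu>2 d \<sigma>"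
      using card_equivariant_eq_binomX[OF \<mu>1 \<tau>(1) \<sigma>] card_equivariant_eq_binomX[OF \<mu>2 \<tau>(2) \<sigma>]
        \<open>z \<noteq> 0\<close> unfolding z_def by (simp add: field_simps)
  qed
qed

lemma binom_combination_mult:
  assumes P: "binom_combination \<Phi>1 P" and Q: "binom_combination \<Phi>2 Q"
    and \<Psi>: "\<And>c1 c2 w. \<Phi>1 c1 \<Longrightarrow> \<Phi>2 c2 \<Longrightarrow> weak_pushout_object c1 c2 w \<Longrightarrow> \<Psi> w"
  shows "binom_combination \<Psi> (\<lambda>d \<sigma>. P d \<sigma> * Q d \<sigma>)"
proof -
  obtain S1 a1 where S1: "finite S1" "\<forall>\<mu>\<in>S1. conj_class C \<mu> \<and> \<Phi>1 (fst \<mu>)"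
    "\<forall>d \<in> Obj C. \<forall>\<sigma> \<in> Aut C d. P d \<sigma> = (\<Sum>\<mu> \<in> S1. a1 \<mu> * binomX C \<mu> d \<sigma>)"
    using P unfolding binom_combination_def by blast
  obtain S2 a2 where S2: "finite S2" "\<forall>\<mu>\<in>S2. conj_class C \<mu> \<and> \<Phi>2 (fst \<mu>)"
    "\<forall>d \<in> Obj C. \<forall>\<sigma> \<in> Aut C d. Q d \<sigma> = (\<Sum>\<mu> \<in> S2. a2 \<mu> * binomX C \<mu> d \<sigma>)"
    using Q unfolding binom_combination_def by blast
  have prod: "binom_combination \<Psi> (\<lambda>d \<sigma>. binomX C \<mu>1 d \<sigma> * binomX C \<mu>2 d \<sigma>)"
    if \<mu>: "\<mu>1 \<in> S1" "\<mu>2 \<in> S2" for \<mu>1 \<mu>2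
  proof (rule binom_combination_mono[OF binomX_product_combination])
    show "conj_class C \<mu>1" "conj_class C \<mu>2" using \<mu> S1(2) S2(2) by auto
    show "\<Psi> w" if "weak_pushout_object (fst \<mu>1) (fst \<mu>2) w" for w
      using \<Psi>[OF _ _ that] \<mu> S1(2) S2(2) by blast
  qed
  have "binom_combination \<Psi> (\<lambda>d \<sigma>. \<Sum>\<mu>1\<in>S1. \<Sum>\<mu>2\<in>S2.
      a1 \<mu>1 * a2 \<mu>2 * (binomX C \<mu>1 d \<sigma> * binomX C \<mu>2 d \<sigma>))"
    using prod by (intro binom_combination_sum binom_combination_scale S1(1) S2(1))
  then show ?thesis
    by (rule binom_combination_cong) (simp add: S1(3) S2(3) sum_product algebra_simps)
qed

lemma pullback_of_factored_cospan:
  assumes pb: "is_pullback C G1 G2 p (Comp C v1 f1) (Comp C v2 f2)"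
    and f: "f1 \<in> hom C p c1'" "f2 \<in> hom C p c2'" and v: "v1 \<in> hom C c1' c1" "v2 \<in> hom C c2' c2"
  shows "is_pullback C (Comp C G1 v1) (Comp C G2 v2) p f1 f2"
proof -
  note D = is_pullbackD[OF pb]
  have m: "f1 \<in> Mor C" "Dom C f1 = p" "Cod C f1 = c1'" "f2 \<in> Mor C" "Dom C f2 = p" "Cod C f2 = c2'"
    "v1 \<in> Mor C" "Dom C v1 = c1'" "Cod C v1 = c1" "v2 \<in> Mor C" "Dom C v2 = c2'" "Cod C v2 = c2"
    using f v by (auto simp: mem_hom)
  have G: "G1 \<in> Mor C" "Dom C G1 = c1" "G2 \<in> Mor C" "Dom C G2 = c2" "Cod C G1 = Cod C G2"
    using D m by simp_all
  show ?thesis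
    unfolding is_pullback_def
  proof (intro conjI ballI impI)
    show "Comp C G1 v1 \<in> Mor C" "Comp C G2 v2 \<in> Mor C" "Cod C (Comp C G1 v1) = Cod C (Comp C G2 v2)"
      "p \<in> Obj C" "f1 \<in> hom C p (Dom C (Comp C G1 v1))" "f2 \<in> hom C p (Dom C (Comp C G2 v2))"
      using G m D by (auto simp: mem_hom)
    show "Comp C (Comp C G1 v1) f1 = Comp C (Comp C G2 v2) f2" using D(11) G m by simp
  next
    fix z k1 k2 assume z: "z \<in> Obj C" and k: "k1 \<in> hom C z (Dom C (Comp C G1 v1))"
      "k2 \<in> hom C z (Dom C (Comp C G2 v2))" and e: "Comp C (Comp C G1 v1) k1 = Comp C (Comp C G2 v2) k2"
    have kh: "k1 \<in> Mor C" "Dom C k1 = z" "Cod C k1 = c1'" "k2 \<in> Mor C" "Dom C k2 = z" "Cod C k2 = c2'"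
      using k G m by (auto simp: mem_hom)
    have "Comp C v1 k1 \<in> hom C z (Dom C G1)" "Comp C v2 k2 \<in> hom C z (Dom C G2)"
      "Comp C G1 (Comp C v1 k1) = Comp C G2 (Comp C v2 k2)"
      using kh m G e by (auto simp: mem_hom)
    from is_pullback_universal[OF pb z this]
    have "\<exists>!j. j \<in> hom C z p \<and> Comp C (Comp C v1 f1) j = Comp C v1 k1 \<and>
        Comp C (Comp C v2 f2) j = Comp C v2 k2" .
    moreover have "(j \<in> hom C z p \<and> Comp C (Comp C v1 f1) j = Comp C v1 k1 \<and>
          Comp C (Comp C v2 f2) j = Comp C v2 k2) \<longleftrightarrow>
        (j \<in> hom C z p \<and> Comp C f1 j = k1 \<and> Comp C f2 j = k2)" for j
    proof (cases "j \<in> hom C z p")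
      case True
      then show ?thesis using m kh by (simp add: mem_hom)
    qed simp
    ultimately show "\<exists>!j. j \<in> hom C z p \<and> Comp C f1 j = k1 \<and> Comp C f2 j = k2"
      by simp
  qed
qed

lemma weak_pushout_object_le:
  assumes d: "geq_sum C d c1 c2" and le: "obj_le C c1' c1" "obj_le C c2' c2"
    and w: "weak_pushout_object c1' c2' w"
  shows "obj_le C w d"
proof -
  obtain p f1 f2 g1 g2 where f: "f1 \<in> hom C p c1'" "f2 \<in> hom C p c2'"
    and wp: "is_weak_pushout C f1 f2 w g1 g2"
    using w unfolding weak_pushout_object_def by blast
  obtain v1 v2 where v: "v1 \<in> hom C c1' c1" "v2 \<in> hom C c2' c2" using le unfolding obj_le_def by blast
  have fv: "Comp C v1 f1 \<in> hom C p c1" "Comp C v2 f2 \<in> hom C p c2" "p \<in> Obj C"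
    using f v dom_cod_obj by (auto simp: mem_hom)
  \<comment> \<open>the weak push-out \<open>w'\<close> of the composite span receives a map from \<open>w\<close>, and \<open>w' \<le> d\<close>\<close>
  have "Comp C v1 f1 \<in> Mor C" "Comp C v2 f2 \<in> Mor C" "Dom C (Comp C v1 f1) = Dom C (Comp C v2 f2)"
    using fv by (auto simp: mem_hom)
  then obtain w' G1 G2 where wp': "is_weak_pushout C (Comp C v1 f1) (Comp C v2 f2) w' G1 G2"
    using exists_weak_pushout by blast
  have "obj_le C w' d" using d wp' fv unfolding geq_sum_def by blast
  then obtain k' where k': "k' \<in> hom C w' d" unfolding obj_le_def by blast
  note W' = is_weak_pushout_span[OF wp' fv(1,2)]
  have "is_pullback C (Comp C G1 v1) (Comp C G2 v2) (Dom C f1) f1 f2"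
    using pullback_of_factored_cospan[OF W'(4) f v] f by (simp add: mem_hom)
  moreover have "Comp C G1 v1 \<in> hom C (Cod C f1) w'" "Comp C G2 v2 \<in> hom C (Cod C f2) w'"
    using f v W' by (auto simp: mem_hom)
  ultimately obtain k where "k \<in> hom C w w'"
    using is_weak_pushout_universal[OF wp W'(1)] by blast
  with k' have "Comp C k' k \<in> hom C w d" by (simp add: mem_hom)
  then show ?thesis unfolding obj_le_def by blast
qed

lemma char_poly_iff_binom_combination: "char_poly C P \<longleftrightarrow> binom_combination (\<lambda>_. True) P"
  unfolding char_poly_def binom_combination_def by simp

lemma char_poly_deg_le_iff_binom_combination:
  "char_poly_deg_le C P e \<longleftrightarrow> binom_combination (\<lambda>c. obj_le C c e) P"
proof
  assume "char_poly_deg_le C P e"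
  then obtain S a where S: "finite S" "\<forall>\<mu>\<in>S. conj_class C \<mu>" "\<forall>\<mu>\<in>S. a \<mu> \<noteq> 0 \<longrightarrow> obj_le C (fst \<mu>) e"
    "\<forall>d\<in>Obj C. \<forall>\<sigma>\<in>Aut C d. P d \<sigma> = (\<Sum>\<mu>\<in>S. a \<mu> * binomX C \<mu> d \<sigma>)"
    unfolding char_poly_deg_le_def by blast
  have "(\<Sum>\<mu>\<in>S. a \<mu> * binomX C \<mu> d \<sigma>) = (\<Sum>\<mu>\<in>{\<mu>\<in>S. a \<mu> \<noteq> 0}. a \<mu> * binomX C \<mu> d \<sigma>)" for d \<sigma>
    by (rule sum.mono_neutral_right[OF S(1)]) auto
  then show "binom_combination (\<lambda>c. obj_le C c e) P"
    unfolding binom_combination_def using S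
    by (intro exI[of _ "{\<mu>\<in>S. a \<mu> \<noteq> 0}"] exI[of _ a]) auto
next
  assume "binom_combination (\<lambda>c. obj_le C c e) P"
  then show "char_poly_deg_le C P e" unfolding binom_combination_def char_poly_deg_le_def by blast
qed

end

theorem mainTheorem8:
  fixes C :: "('o, 'm) cat"
    and P Q :: "'o \<Rightarrow> 'm \<Rightarrow> complex"
  assumes "FI_type C"
  shows "(char_poly C P \<longrightarrow> char_poly C Q \<longrightarrow> char_poly C (\<lambda>d \<sigma>. P d \<sigma> * Q d \<sigma>)) \<and>
         (\<forall>c1 \<in> Obj C. \<forall>c2 \<in> Obj C.
            char_poly_deg_le C P c1 \<longrightarrow> char_poly_deg_le C Q c2 \<longrightarrow>
            (\<forall>d. geq_sum C d c1 c2 \<longrightarrow> char_poly_deg_le C (\<lambda>d \<sigma>. P d \<sigma> * Q d \<sigma>) d))"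
proof -
  interpret fi_category C
    using assms by unfold_locales (simp_all add: FI_type_def)
  have "char_poly C (\<lambda>d \<sigma>. P d \<sigma> * Q d \<sigma>)" if "char_poly C P" "char_poly C Q"
    using binom_combination_mult[of "\<lambda>_. True" P "\<lambda>_. True" Q "\<lambda>_. True"] that
    unfolding char_poly_iff_binom_combination by simp
  moreover have "char_poly_deg_le C (\<lambda>d \<sigma>. P d \<sigma> * Q d \<sigma>) d"
    if "char_poly_deg_le C P c1" "char_poly_deg_le C Q c2" "geq_sum C d c1 c2" for c1 c2 d
    using binom_combination_mult[OF that(1,2)[unfolded char_poly_deg_le_iff_binom_combination]
        weak_pushout_object_le[OF that(3)]]
    unfolding char_poly_deg_le_iff_binom_combination .
  ultimately show ?thesis by blast
qed

end
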